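(* In the standing setting, if $0<\mu_1\le\mu_0$ then $$\|x_{\mu_1}\|_{x_{\mu_0}}\le\nu,\qquad \|s_{\mu_1}\|_{s_{\mu_0}}\le\nu .$$ Consequently, for every limit point $x_*$ of $x_\mu$ and every limit point $s_*$ of $s_\mu$ as $\mu\to0$, $\|x_*\|_B\le\nu$ and $\|s_*\|_B\le\nu$. Moreover, for every $\mu\in(0,1]$, $$\tfrac1{4\nu^2}B\preceq\nabla^2F(x_\mu)\preceq\tfrac{4\nu^2}{\mu^2}B,\qquad \tfrac1{4\nu^2}B^{-1}\preceq\nabla^2F_*(s_\mu)\preceq\tfrac{4\nu^2}{\mu^2}B^{-1}.$$
   Context: Standing setting: $\mathbb E,\mathbb H$ finite-dimensional real spaces with duals, pairing $\langle\cdot,\cdot\rangle$; $K\subset\mathbb E$ a regular cone with dual cone $K^*$; $F$ a $\nu$-normal barrier for $K$ (a $\nu$-self-concordant barrier on $\operatorname{int}K$ with $F(\tau x)=F(x)-\nu\ln\tau$) and $F_*(s)=\max_{x\in\operatorname{int}K}\{-\langle s,x\rangle-F(x)\}$ its dual barrier on $\operatorname{int}K^*$. $A:\mathbb E\to\mathbb H^*$ linear, $c\in\mathbb E^*$, $b\in\mathbb H^*$; primal $\min\{\langle c,x\rangle:Ax=b,x\in K\}$, dual $\max\{\langle b,y\rangle:s+A^*y=c,s\in K^*\}$, both strictly feasible. The central path is, for $\mu>0$, the unique $(x_\mu,s_\mu,y_\mu)$ with $Ax_\mu=b$, $s_\mu+A^*y_\mu=c$, $s_\mu=-\mu\nabla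 F(x_\mu)$ (equivalently $x_\mu=-\mu\nabla F_*(s_\mu)$). Local norms: $\|u\|_x=\langle\nabla^2F(x)u,u\rangle^{1/2}$ for $x\in\operatorname{int}K,u\in\mathbb E$; $\|s\|_{s'}=\langle s,\nabla^2F_*(s')s\rangle^{1/2}$ for $s'\in\operatorname{int}K^*,s\in\mathbb E^*$. $B=\nabla^2F(x_1)$ (Hessian at the primal central point with $\mu=1$), $\|x\|_B=\langle Bx,x\rangle^{1/2}$ for $x\in\mathbb E$, $\|s\|_B=\langle s,B^{-1}s\rangle^{1/2}$ for $s\in\mathbb E^*$; $\preceq$ is the Löwner order. *)

theory Defs
  imports "HOL-Analysis.Analysis"
begin

text \<open>The finite-dimensional real spaces E and H are modelled by
  euclidean spaces; the dual spaces are identified with the spaces themselves via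
  the inner product, so the pairing is the inner product. Second derivatives are
  represented as (self-)linear operators: the Hessian of F at x is the linear map
  hF x with hF x u = Hessian(x) u.\<close>

definition dual_cone :: "'a::real_inner set \<Rightarrow> 'a set" where
  "dual_cone K = {s. \<forall>x\<in>K. 0 \<le> inner s x}"

definition regular_cone :: "'a::euclidean_space set \<Rightarrow> bool" where
  "regular_cone K \<longleftrightarrow> closed K \<and> convex K \<and> cone K \<and> interior K \<noteq> {}
     \<and> K \<inter> uminus ` K = {0}"

text \<open>nu-self-concordant barrier on an open convex set Q, with gradient g,
  Hessian h and third derivative d3 (d3 x u v = D^3 F(x)[u,v,-]).\<close>
definition sc_barrier ::
  "'a::euclidean_space set \<Rightarrow> ('a \<Rightarrow> real) \<Rightarrow> ('a \<Rightarrow> 'a) \<Rightarrow> ('a \<Rightarrow> 'a \<Rightarrow> 'a)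
    \<Rightarrow> ('a \<Rightarrow> 'a \<Rightarrow> 'a \<Rightarrow> 'a) \<Rightarrow> real \<Rightarrow> bool" where
  "sc_barrier Q F g h d3 \<nu> \<longleftrightarrow>
     open Q \<and> convex Q \<and> Q \<noteq> {} \<and>
     (\<forall>x\<in>Q. (F has_derivative (\<lambda>u. inner (g x) u)) (at x)) \<and>
     (\<forall>x\<in>Q. (g has_derivative h x) (at x)) \<and>
     (\<forall>x\<in>Q. \<forall>u. ((\<lambda>y. h y u) has_derivative d3 x u) (at x)) \<and>
     (\<forall>u v. continuous_on Q (\<lambda>y. d3 y u v)) \<and>
     (\<forall>x\<in>Q. \<forall>u. 0 \<le> inner (h x u) u) \<and>
     (\<forall>z\<in>frontier Q. filterlim F at_top (at z within Q)) \<and>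
     (\<forall>x\<in>Q. \<forall>u. \<bar>inner (d3 x u u) u\<bar> \<le> 2 * (inner (h x u) u) powr (3/2)) \<and>
     (\<forall>x\<in>Q. \<forall>u. (inner (g x) u)\<^sup>2 \<le> \<nu> * inner (h x u) u)"

definition normal_barrier ::
  "'a::euclidean_space set \<Rightarrow> ('a \<Rightarrow> real) \<Rightarrow> ('a \<Rightarrow> 'a) \<Rightarrow> ('a \<Rightarrow> 'a \<Rightarrow> 'a)
    \<Rightarrow> ('a \<Rightarrow> 'a \<Rightarrow> 'a \<Rightarrow> 'a) \<Rightarrow> real \<Rightarrow> bool" where
  "normal_barrier K F g h d3 \<nu> \<longleftrightarrow>
     sc_barrier (interior K) F g h d3 \<nu> \<and>
     (\<forall>x\<in>interior K. \<forall>\<tau>>0. F (\<tau> *\<^sub>R x) = F x - \<nu> * ln \<tau>)"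

definition local_norm :: "('a::real_inner \<Rightarrow> 'a \<Rightarrow> 'a) \<Rightarrow> 'a \<Rightarrow> 'a \<Rightarrow> real" where
  "local_norm H p u = sqrt (inner (H p u) u)"

definition op_norm_B :: "('a::real_inner \<Rightarrow> 'a) \<Rightarrow> 'a \<Rightarrow> real" where
  "op_norm_B B u = sqrt (inner (B u) u)"

definition loewner_le :: "('a::real_inner \<Rightarrow> 'a) \<Rightarrow> ('a \<Rightarrow> 'a) \<Rightarrow> bool" where
  "loewner_le P Q \<longleftrightarrow> (\<forall>u. inner (P u) u \<le> inner (Q u) u)"

definition limit_point_at0 :: "(real \<Rightarrow> 'a::metric_space) \<Rightarrow> 'a \<Rightarrow> bool" where
  "limit_point_at0 p z \<longleftrightarrow>
     (\<exists>m::nat \<Rightarrow> real. (\<forall>k. 0 < m k) \<and> m \<longlonglongrightarrow> 0 \<and> (\<lambda>k. p (m k)) \<longlonglongrightarrow> z)"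

end

theory Submission
  imports Defs
begin

text \<open>Two properties of a \<open>\<nu>\<close>-normal barrier drive everything. First, for \<open>x \<in> int K\<close> and
  \<open>y \<in> K\<close> the local norm is dominated by a linear functional,
  \<open>\<parallel>y\<parallel>\<^sub>x \<le> -\<langle>\<nabla>F(x), y\<rangle>\<close>, which comes from integrating the self-concordance inequality
  along the ray \<open>x + t y\<close>. Second, monotonicity of \<open>\<nabla>F\<close> together with the orthogonality of
  primal and dual steps along the central path gives \<open>\<langle>s\<^sub>\<mu>\<^sub>0, x\<^sub>\<mu>\<^sub>1\<rangle> \<le> \<nu>\<mu>\<^sub>0\<close> and
  \<open>\<langle>s\<^sub>\<mu>\<^sub>1, x\<^sub>\<mu>\<^sub>0\<rangle> \<le> \<nu>\<mu>\<^sub>0\<close> for \<open>\<mu>\<^sub>1 \<le> \<mu>\<^sub>0\<close>. As \<open>s\<^sub>\<mu> = -\<mu>\<nabla>F(x\<^sub>\<mu>)\<close>, these yield the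
  local-norm bounds, and the bounds on limit points follow by continuity. Since the Dikin
  ellipsoid \<open>{c + u. \<parallel>u\<parallel>\<^sub>c < 1}\<close> lies in \<open>int K\<close>, the parallelogram law turns the first property
  into \<open>\<nabla>\<^sup>2F(p) \<preceq> 2\<langle>\<nabla>F(p), c\<rangle>\<^sup>2 \<nabla>\<^sup>2F(c)\<close>; taking \<open>p, c \<in> {x\<^sub>\<mu>, x\<^sub>1}\<close> gives the Hessian
  sandwich, which \<open>\<nabla>\<^sup>2F\<^sub>*(s\<^sub>\<mu>) = (\<mu>\<^sup>2 \<nabla>\<^sup>2F(x\<^sub>\<mu>))\<^sup>-\<^sup>1\<close> transfers to the dual barrier.\<close>

section \<open>Real-analysis preliminaries\<close>

lemma has_vector_derivative_along_line:
  assumes "(f has_derivative f') (at (x + t *\<^sub>R y))"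
  shows "((\<lambda>t. f (x + t *\<^sub>R y)) has_vector_derivative f' y) (at t)"
proof -
  have "((\<lambda>t. x + t *\<^sub>R y) has_derivative (\<lambda>s. s *\<^sub>R y)) (at t)"
    by (auto intro!: derivative_eq_intros)
  from has_derivative_compose[OF this assms]
  have "((\<lambda>t. f (x + t *\<^sub>R y)) has_derivative (\<lambda>s. f' (s *\<^sub>R y))) (at t)" .
  moreover have "(\<lambda>s. f' (s *\<^sub>R y)) = (\<lambda>s. s *\<^sub>R f' y)"
    using assms has_derivative_linear linear_scale by blast
  ultimately show ?thesis unfolding has_vector_derivative_def by simp
qed

lemma has_real_derivative_along_line:
  fixes f :: "'a::real_normed_vector \<Rightarrow> real"
  assumes "(f has_derivative f') (at (x + t *\<^sub>R y))"
  shows "((\<lambda>t. f (x + t *\<^sub>R y)) has_real_derivative f' y) (at t)"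
  using has_vector_derivative_along_line[OF assms]
  by (simp add: has_real_derivative_iff_has_vector_derivative)

lemma continuous_nonpos_at_endpoint:
  fixes p :: "real \<Rightarrow> real"
  assumes ab: "a \<le> b" and cont: "continuous_on {a..b} p" and pa: "p a \<le> 0"
    and no_last_zero: "\<And>t0. a \<le> t0 \<Longrightarrow> t0 < b \<Longrightarrow> p t0 = 0 \<Longrightarrow> (\<forall>t\<in>{t0<..b}. p t > 0) \<Longrightarrow> False"
  shows "p b \<le> 0"
proof (rule ccontr)
  assume pb: "\<not> p b \<le> 0"
  let ?S = "{t \<in> {a..b}. p t \<le> 0}"
  have "closed ?S"
    using continuous_on_closed_Collect_le[OF cont continuous_on_const closed_atLeastAtMost] by simp
  moreover have "bounded ?S" by (rule bounded_subset[of "{a..b}"]) auto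
  ultimately have "compact ?S" using compact_eq_bounded_closed by blast
  moreover have "a \<in> ?S" using ab pa by auto
  ultimately obtain t0 where t0: "t0 \<in> ?S" and last: "\<forall>t\<in>?S. t \<le> t0"
    using compact_attains_sup[of ?S] by blast
  have t0b: "t0 < b" using t0 pb by (cases "t0 = b") auto
  have pos: "\<forall>t\<in>{t0<..b}. p t > 0"
  proof
    fix t assume "t \<in> {t0<..b}"
    then have "t \<in> {a..b}" "\<not> t \<le> t0" using t0 by auto
    then show "p t > 0" using last by force
  qed
  have "p t0 = 0"
  proof -
    have "continuous_on {t0..b} p" using cont t0 by (auto intro: continuous_on_subset)
    from IVT'[of p t0 0 b, OF _ _ _ this] obtain x where x: "t0 \<le> x" "x \<le> b" "p x = 0"
      using pb t0b t0 by force
    then have "x \<le> t0" using last t0 by auto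
    with x show ?thesis by auto
  qed
  then show False using no_last_zero[of t0] t0 t0b pos by auto
qed

lemma sqrt_le_of_le_mult_sqrt:
  fixes a q C :: real
  assumes "0 \<le> a" "0 \<le> q" "0 \<le> C" and "a^2 * q \<le> C * a * sqrt q"
  shows "sqrt (a^2 * q) \<le> C"
proof -
  define t where "t = a * sqrt q"
  have "t \<ge> 0" "sqrt (a^2 * q) = t"
    using assms unfolding t_def by (simp_all add: real_sqrt_mult)
  moreover have "t * t \<le> C * t"
    using assms unfolding t_def by (simp add: power2_eq_square algebra_simps)
  ultimately show ?thesis using assms(3) by (cases "t = 0") (auto simp: mult_le_cancel_right)
qed

text \<open>A nonpositive function whose slope is at least \<open>r\<^sup>2/(1 + r t)\<^sup>2\<close> satisfies
  \<open>a(t) \<ge> a(0) + r - r/(1 + r t)\<close>, so letting \<open>t \<rightarrow> \<infinity>\<close> gives \<open>a(0) + r \<le> 0\<close>.\<close>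

lemma initial_slope_bound:
  fixes a b :: "real \<Rightarrow> real"
  assumes r: "r > 0"
    and deriv: "\<And>t. 0 \<le> t \<Longrightarrow> (a has_real_derivative b t) (at t)"
    and nonpos: "\<And>t. 0 \<le> t \<Longrightarrow> a t \<le> 0"
    and slope: "\<And>t. 0 \<le> t \<Longrightarrow> 1 \<le> b t * (1/r + t)^2"
  shows "r \<le> - a 0"
proof (rule ccontr)
  define e where "e t = a t + r / (1 + r * t)" for t
  have e_mono: "e 0 \<le> e T" if T: "0 \<le> T" for T
  proof (rule DERIV_nonneg_imp_nondecreasing[OF T])
    fix t assume t: "0 \<le> t" "t \<le> T"
    have pos: "1 + r * t > 0" using r t by (simp add: add_pos_nonneg)
    have "(e has_real_derivative b t - r^2 / (1 + r * t)^2) (at t)" unfolding e_def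
      using pos by (auto intro!: derivative_eq_intros deriv[OF t(1)] simp: power2_eq_square field_simps)
    moreover have "r^2 \<le> b t * (1 + r * t)^2" using slope[OF t(1)] r by (simp add: field_simps)
    then have "r^2 / (1 + r * t)^2 \<le> b t" using pos by (simp add: pos_divide_le_eq)
    ultimately show "\<exists>y. (e has_real_derivative y) (at t) \<and> 0 \<le> y" by auto
  qed
  assume "\<not> r \<le> - a 0"
  then have pos: "a 0 + r > 0" by simp
  define T where "T = 1 / (a 0 + r)"
  have T: "T \<ge> 0" using pos by (simp add: T_def)
  have "a 0 + r \<le> a T + r / (1 + r * T)" using e_mono[OF T] unfolding e_def by simp
  also have "\<dots> \<le> r / (1 + r * T)" using nonpos[OF T] by simp
  also have "\<dots> < a 0 + r"
  proof -
    have "0 < r * r + (a 0 * a 0 + r * (a 0 * 2))"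
      using mult_pos_pos[OF pos pos] by (simp add: algebra_simps)
    then show ?thesis using pos r unfolding T_def by (simp add: field_simps)
  qed
  finally show False by simp
qed

lemma inverse_sqrt_plus_mono:
  fixes b b' :: "real \<Rightarrow> real"
  assumes t01: "t0 \<le> t1"
    and deriv: "\<And>t. t0 \<le> t \<Longrightarrow> t \<le> t1 \<Longrightarrow> (b has_real_derivative b' t) (at t)"
    and pos: "\<And>t. t0 \<le> t \<Longrightarrow> t \<le> t1 \<Longrightarrow> 0 < b t"
    and slope: "\<And>t. t0 \<le> t \<Longrightarrow> t \<le> t1 \<Longrightarrow> b' t \<le> 2 * (b t * sqrt (b t))"
  shows "1 / sqrt (b t0) + t0 \<le> 1 / sqrt (b t1) + t1"
proof (rule DERIV_nonneg_imp_nondecreasing[OF t01])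
  fix t assume t: "t0 \<le> t" "t \<le> t1"
  have "((\<lambda>t. 1 / sqrt (b t) + t) has_real_derivative 1 - b' t / (2 * b t * sqrt (b t))) (at t)"
    using deriv[OF t] pos[OF t] by (auto intro!: derivative_eq_intros simp: field_simps power2_eq_square)
  moreover have "b' t / (2 * b t * sqrt (b t)) \<le> 1"
    using slope[OF t] pos[OF t] by (simp add: field_simps)
  ultimately show "\<exists>y. ((\<lambda>t. 1 / sqrt (b t) + t) has_real_derivative y) (at t) \<and> 0 \<le> y" by auto
qed

text \<open>Comparison lemmas for the differential inequality \<open>\<bar>b'\<bar> \<le> 2 b\<^sup>3\<^sup>/\<^sup>2\<close> satisfied by
  \<open>t \<mapsto> \<langle>\<nabla>\<^sup>2F(x + t u) u, u\<rangle>\<close>; its extremal solutions are \<open>1 / (1/r \<plusminus> t)\<^sup>2\<close>.\<close>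

lemma self_concordant_lower_bound:
  fixes b b' :: "real \<Rightarrow> real"
  assumes T: "0 \<le> T" and r: "r > 0" and b0: "b 0 = r^2"
    and deriv: "\<And>t. 0 \<le> t \<Longrightarrow> t \<le> T \<Longrightarrow> (b has_real_derivative b' t) (at t)"
    and nonneg: "\<And>t. 0 \<le> t \<Longrightarrow> t \<le> T \<Longrightarrow> 0 \<le> b t"
    and slope: "\<And>t. 0 \<le> t \<Longrightarrow> t \<le> T \<Longrightarrow> - (2 * (b t * sqrt (b t))) \<le> b' t"
  shows "1 \<le> b T * (1/r + T)^2"
proof -
  define p where "p t = 1 - b t * (1/r + t)^2" for t
  have "p T \<le> 0"
  proof (rule continuous_nonpos_at_endpoint[OF T])
    show "continuous_on {0..T} p" unfolding p_def
      by (intro continuous_intros continuous_at_imp_continuous_on ballI DERIV_isCont[OF deriv]) auto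
    show "p 0 \<le> 0" unfolding p_def using b0 r by (simp add: field_simps)
    fix t0 assume t0: "0 \<le> t0" "t0 < T" "p t0 = 0" and pos: "\<forall>t\<in>{t0<..T}. 0 < p t"
    define \<psi> where "\<psi> t = b t * (1/r + t)^2" for t
    define \<psi>' where "\<psi>' t = b' t * (1/r + t)^2 + b t * (2 * (1/r + t))" for t
    have "\<exists>z. t0 < z \<and> z < T \<and> \<psi> T - \<psi> t0 = (T - t0) * \<psi>' z"
    proof (rule MVT2[OF t0(2)])
      fix t assume "t0 \<le> t" "t \<le> T"
      then show "(\<psi> has_real_derivative \<psi>' t) (at t)" unfolding \<psi>_def \<psi>'_def
        using r t0 by (auto intro!: derivative_eq_intros deriv simp: power2_eq_square field_simps)
    qed
    then obtain z where z: "t0 < z" "z < T" "\<psi> T - \<psi> t0 = (T - t0) * \<psi>' z" by blast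
    have z0: "0 \<le> z" "z \<le> T" using z t0 by simp_all
    have c0: "1/r + z > 0" using r z0 by (simp add: add_pos_nonneg)
    have "sqrt (b z) * (1/r + z) = sqrt (\<psi> z)"
      unfolding \<psi>_def using c0 nonneg[OF z0] by (simp add: real_sqrt_mult)
    also have "\<dots> \<le> 1"
    proof -
      have "\<psi> z < 1" using pos z unfolding p_def \<psi>_def by auto
      then show ?thesis by simp
    qed
    finally have sq: "sqrt (b z) * (1/r + z) \<le> 1" .
    have "- (2 * (b z * sqrt (b z))) * (1/r + z)^2 + b z * (2 * (1/r + z)) \<le> \<psi>' z"
      unfolding \<psi>'_def using slope[OF z0] by (intro add_right_mono mult_right_mono) auto
    moreover have "- (2 * (b z * sqrt (b z))) * (1/r + z)^2 + b z * (2 * (1/r + z))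
        = 2 * b z * (1/r + z) * (1 - sqrt (b z) * (1/r + z))"
      by (simp add: power2_eq_square algebra_simps)
    moreover have "0 \<le> 2 * b z * (1/r + z) * (1 - sqrt (b z) * (1/r + z))"
      using nonneg[OF z0] c0 sq by simp
    ultimately have "\<psi> t0 \<le> \<psi> T" using z by (smt (verit) mult_nonneg_nonneg)
    moreover have "\<psi> t0 = 1" using t0 unfolding p_def \<psi>_def by simp
    moreover have "p T > 0" using pos t0 by auto
    ultimately show False unfolding p_def \<psi>_def by simp
  qed
  then show ?thesis unfolding p_def by simp
qed

lemma self_concordant_upper_bound:
  fixes b b' :: "real \<Rightarrow> real"
  assumes T: "0 \<le> T" "r * T < 1" and r: "r > 0" and b0: "b 0 \<le> r^2"
    and deriv: "\<And>t. 0 \<le> t \<Longrightarrow> t \<le> T \<Longrightarrow> (b has_real_derivative b' t) (at t)"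
    and slope: "\<And>t. 0 \<le> t \<Longrightarrow> t \<le> T \<Longrightarrow> b' t \<le> 2 * (b t * sqrt (b t))"
  shows "b T \<le> 1 / (1/r - T)^2"
proof -
  define \<rho> where "\<rho> t = 1 / (1/r - t)^2" for t
  have gap: "1/r - t > 0" if "t \<le> T" for t
  proof -
    have "r * t < 1" using that T r by (smt (verit) mult_left_mono)
    then show ?thesis using r by (simp add: field_simps)
  qed
  define p where "p t = b t - \<rho> t" for t
  have "p T \<le> 0"
  proof (rule continuous_nonpos_at_endpoint[OF T(1)])
    have \<rho>_cont: "continuous_on {0..T} \<rho>" unfolding \<rho>_def
      using gap by (intro continuous_intros ballI) (simp add: less_imp_neq[symmetric])
    then show "continuous_on {0..T} p" unfolding p_def
      by (intro continuous_on_diff \<rho>_cont continuous_at_imp_continuous_on ballI DERIV_isCont[OF deriv])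
        auto
    show "p 0 \<le> 0" unfolding p_def \<rho>_def using b0 r by (simp add: field_simps)
    fix t0 assume t0: "0 \<le> t0" "t0 < T" "p t0 = 0" and pos: "\<forall>t\<in>{t0<..T}. 0 < p t"
    have b_pos: "b t > 0" if "t0 \<le> t" "t \<le> T" for t
    proof -
      have "p t \<ge> 0"
      proof (cases "t = t0")
        case False
        then have "t \<in> {t0<..T}" using that by auto
        then show ?thesis using pos by fastforce
      qed (use t0 in simp)
      moreover have "\<rho> t > 0" unfolding \<rho>_def using gap[OF that(2)] by simp
      ultimately show ?thesis unfolding p_def by simp
    qed
    define \<eta> where "\<eta> t = 1 / sqrt (b t) + t" for t
    have "\<eta> t0 \<le> \<eta> T"
      unfolding \<eta>_def
      by (rule inverse_sqrt_plus_mono[where b' = b']) (use t0 b_pos deriv slope in auto)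
    moreover have "\<eta> t0 = 1/r"
    proof -
      have "sqrt (b t0) = 1 / (1/r - t0)"
        using t0 gap[of t0] unfolding p_def \<rho>_def by (simp add: real_sqrt_divide)
      then show ?thesis unfolding \<eta>_def using gap[of t0] t0 by simp
    qed
    ultimately have "sqrt (b T) \<le> 1 / (1/r - T)"
      using gap[of T] b_pos[of T] t0 unfolding \<eta>_def by (simp add: field_simps)
    then have "b T \<le> (1 / (1/r - T))^2" by (rule sqrt_le_D)
    then have "p T \<le> 0" unfolding p_def \<rho>_def by (simp add: power_divide)
    moreover have "T \<in> {t0<..T}" using t0 by simp
    ultimately show False using pos by fastforce
  qed
  then show ?thesis unfolding p_def \<rho>_def by simp
qed

lemma quadratic_le_of_sublevel_bound:
  fixes pa pb :: "'a::real_vector \<Rightarrow> real"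
  assumes pa_scale: "\<And>c u. pa (c *\<^sub>R u) = c^2 * pa u"
    and pb_scale: "\<And>c u. pb (c *\<^sub>R u) = c^2 * pb u"
    and pa_nonneg: "\<And>u. 0 \<le> pa u"
    and bound: "\<And>u. pa u < 1 \<Longrightarrow> pb u \<le> C"
  shows "pb u \<le> C * pa u"
proof (cases "pa u = 0")
  case True
  show ?thesis
  proof (rule ccontr)
    assume "\<not> ?thesis"
    then have pos: "pb u > 0" using True by simp
    define t where "t = sqrt ((\<bar>C\<bar> + 1) / pb u)"
    have "pb (t *\<^sub>R u) \<le> C" using bound pa_scale True by simp
    moreover have "pb (t *\<^sub>R u) = \<bar>C\<bar> + 1" using pb_scale pos unfolding t_def by simp
    ultimately show False by simp
  qed
next
  case False
  then have pos: "pa u > 0" using pa_nonneg le_less by metis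
  have "pb u / pa u \<le> C"
  proof (rule field_le_mult_one_interval)
    fix z :: real assume z: "0 < z" "z < 1"
    define c where "c = sqrt (z / pa u)"
    have c2: "c^2 = z / pa u" using z pos unfolding c_def by simp
    then have "pa (c *\<^sub>R u) = z" using pa_scale pos by simp
    then have "pb (c *\<^sub>R u) \<le> C" using bound z by simp
    then show "z * (pb u / pa u) \<le> C" using pb_scale c2 by simp
  qed
  then show ?thesis using pos by (simp add: pos_divide_le_eq)
qed

lemma inverse_quadratic_form_le:
  fixes P Q :: "'a::real_inner \<Rightarrow> 'a"
  assumes "linear P" "linear Q" and P_sym: "\<And>a b. inner (P a) b = inner (P b) a"
    and P_psd: "\<And>a. 0 \<le> inner (P a) a" and c: "c > 0"
    and le: "\<And>a. inner (P a) a \<le> c * inner (Q a) a"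
    and v: "P v = w" and u: "Q u = w"
  shows "inner w u \<le> c * inner w v"
proof -
  define u' where "u' = (1/c) *\<^sub>R u"
  have "0 \<le> inner (P (u' - v)) (u' - v)" by (rule P_psd)
  also have "\<dots> = inner (P u') u' - 2 * inner (P v) u' + inner (P v) v"
    using assms(1) P_sym[of u' v] by (simp add: linear_diff inner_diff_left inner_diff_right inner_commute)
  also have "inner (P v) u' = inner w u / c" unfolding u'_def using v by simp
  also have "inner (P v) v = inner w v" using v by simp
  finally have 1: "0 \<le> inner (P u') u' - 2 * (inner w u / c) + inner w v" .
  have "inner (P u') u' \<le> c * inner (Q u') u'" by (rule le)
  also have "\<dots> = inner w u / c" unfolding u'_def using assms(2) u c
    by (simp add: linear_scale power2_eq_square inner_commute)
  finally have "inner w u / c \<le> inner w v" using 1 by linarith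
  then show ?thesis using c by (simp add: pos_divide_le_eq mult.commute)
qed

text \<open>Schwarz's theorem: by the mean value theorem, applied twice, a mixed second difference
  of \<open>F\<close> is \<open>r\<^sup>2\<close> times a value of the Hessian near \<open>x\<close>; continuity then forces symmetry.\<close>

lemma mixed_second_difference:
  fixes F :: "'a::real_inner \<Rightarrow> real"
  assumes F': "\<And>y. y \<in> S \<Longrightarrow> (F has_derivative (\<lambda>u. inner (g y) u)) (at y)"
    and g': "\<And>y. y \<in> S \<Longrightarrow> (g has_derivative h y) (at y)"
    and r: "r > 0" and box: "\<And>a b. 0 \<le> a \<Longrightarrow> a \<le> r \<Longrightarrow> 0 \<le> b \<Longrightarrow> b \<le> r \<Longrightarrow> x + a *\<^sub>R u + b *\<^sub>R v \<in> S"
  obtains a b where "0 \<le> a" "a \<le> r" "0 \<le> b" "b \<le> r"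
    "F (x + r *\<^sub>R u + r *\<^sub>R v) - F (x + r *\<^sub>R u) - F (x + r *\<^sub>R v) + F x
       = r * r * inner (h (x + a *\<^sub>R u + b *\<^sub>R v) v) u"
proof -
  define p where "p a = F (x + r *\<^sub>R v + a *\<^sub>R u) - F (x + a *\<^sub>R u)" for a
  define p' where "p' a = inner (g (x + r *\<^sub>R v + a *\<^sub>R u)) u - inner (g (x + a *\<^sub>R u)) u" for a
  have "\<exists>z. 0 < z \<and> z < r \<and> p r - p 0 = (r - 0) * p' z"
  proof (rule MVT2[OF r])
    fix a assume a: "0 \<le> a" "a \<le> r"
    have "x + r *\<^sub>R v + a *\<^sub>R u \<in> S" "x + a *\<^sub>R u \<in> S"
      using box[OF a, of r] box[OF a, of 0] r by (simp_all add: algebra_simps)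
    then show "(p has_real_derivative p' a) (at a)" unfolding p_def p'_def
      by (intro DERIV_diff has_real_derivative_along_line F')
  qed
  then obtain a where a: "0 < a" "a < r" "p r - p 0 = r * p' a" by auto
  define k where "k b = inner (g (x + a *\<^sub>R u + b *\<^sub>R v)) u" for b
  have "\<exists>z. 0 < z \<and> z < r \<and> k r - k 0 = (r - 0) * inner (h (x + a *\<^sub>R u + z *\<^sub>R v) v) u"
  proof (rule MVT2[OF r])
    fix b assume "0 \<le> b" "b \<le> r"
    then have "x + a *\<^sub>R u + b *\<^sub>R v \<in> S" using box a by simp
    then show "(k has_real_derivative inner (h (x + a *\<^sub>R u + b *\<^sub>R v) v) u) (at b)"
      unfolding k_def by (intro has_real_derivative_along_line has_derivative_inner_left g')
  qed
  then obtain b where b: "0 < b" "b < r" "k r - k 0 = r * inner (h (x + a *\<^sub>R u + b *\<^sub>R v) v) u"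
    by auto
  have "p' a = k r - k 0" unfolding p'_def k_def by (simp add: algebra_simps)
  moreover have "p r - p 0 = F (x + r *\<^sub>R u + r *\<^sub>R v) - F (x + r *\<^sub>R u) - F (x + r *\<^sub>R v) + F x"
    unfolding p_def by (simp add: algebra_simps)
  ultimately show ?thesis using that[of a b] a b by simp
qed

lemma hessian_symmetric:
  fixes F :: "'a::real_inner \<Rightarrow> real"
  assumes S: "open S" "x \<in> S"
    and F': "\<And>y. y \<in> S \<Longrightarrow> (F has_derivative (\<lambda>u. inner (g y) u)) (at y)"
    and g': "\<And>y. y \<in> S \<Longrightarrow> (g has_derivative h y) (at y)"
    and h_cont: "\<And>u v. isCont (\<lambda>y. inner (h y v) u) x"
  shows "inner (h x v) u = inner (h x u) v"
proof (rule ccontr)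
  assume ne: "inner (h x v) u \<noteq> inner (h x u) v"
  define \<epsilon> where "\<epsilon> = \<bar>inner (h x v) u - inner (h x u) v\<bar> / 2"
  have e0: "\<epsilon> > 0" using ne unfolding \<epsilon>_def by simp
  obtain d1 where d1: "d1 > 0" "\<forall>y. dist y x < d1 \<longrightarrow> dist (inner (h y v) u) (inner (h x v) u) < \<epsilon>"
    using h_cont e0 unfolding continuous_at_eps_delta by blast
  obtain d2 where d2: "d2 > 0" "\<forall>y. dist y x < d2 \<longrightarrow> dist (inner (h y u) v) (inner (h x u) v) < \<epsilon>"
    using h_cont e0 unfolding continuous_at_eps_delta by blast
  obtain e where e: "e > 0" "ball x e \<subseteq> S" using S open_contains_ball by blast
  define \<delta> where "\<delta> = min e (min d1 d2)"
  define r where "r = \<delta> / (2 * (norm u + norm v + 1))"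
  have \<delta>: "\<delta> > 0" unfolding \<delta>_def using e d1 d2 by simp
  then have r: "r > 0" unfolding r_def by (simp add: add_nonneg_pos)
  have "norm u + norm v + 1 > 0" by (simp add: add_nonneg_pos)
  then have "r * (norm u + norm v + 1) = \<delta> / 2" unfolding r_def by (simp add: field_simps)
  then have rN: "r * norm u + r * norm v < \<delta>" using \<delta> r by (simp add: algebra_simps)
  have close: "dist (x + a *\<^sub>R w1 + b *\<^sub>R w2) x < \<delta>"
    if "0 \<le> a" "a \<le> r" "0 \<le> b" "b \<le> r" and "w1 = u \<and> w2 = v \<or> w1 = v \<and> w2 = u" for a b w1 w2
  proof -
    have "dist (x + a *\<^sub>R w1 + b *\<^sub>R w2) x \<le> a * norm w1 + b * norm w2"
      using that norm_triangle_ineq[of "a *\<^sub>R w1" "b *\<^sub>R w2"] by (simp add: dist_norm)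
    also have "\<dots> \<le> r * norm w1 + r * norm w2" using that by (intro add_mono mult_right_mono) auto
    finally show ?thesis using that rN by auto
  qed
  have box: "x + a *\<^sub>R w1 + b *\<^sub>R w2 \<in> S"
    if "0 \<le> a" "a \<le> r" "0 \<le> b" "b \<le> r" and "w1 = u \<and> w2 = v \<or> w1 = v \<and> w2 = u" for a b w1 w2
    using close[OF that] e unfolding \<delta>_def by (auto simp: dist_commute)
  obtain a1 b1 where ab1: "0 \<le> a1" "a1 \<le> r" "0 \<le> b1" "b1 \<le> r"
    and D1: "F (x + r *\<^sub>R u + r *\<^sub>R v) - F (x + r *\<^sub>R u) - F (x + r *\<^sub>R v) + F x
       = r * r * inner (h (x + a1 *\<^sub>R u + b1 *\<^sub>R v) v) u"
    using mixed_second_difference[of S F g h r x u v, OF F' g' r] box by blast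
  obtain a2 b2 where ab2: "0 \<le> a2" "a2 \<le> r" "0 \<le> b2" "b2 \<le> r"
    and D2: "F (x + r *\<^sub>R v + r *\<^sub>R u) - F (x + r *\<^sub>R v) - F (x + r *\<^sub>R u) + F x
       = r * r * inner (h (x + a2 *\<^sub>R v + b2 *\<^sub>R u) u) v"
    using mixed_second_difference[of S F g h r x v u, OF F' g' r] box by blast
  have "x + r *\<^sub>R v + r *\<^sub>R u = x + r *\<^sub>R u + r *\<^sub>R v" by (simp add: algebra_simps)
  note D2 = D2[unfolded this]
  from D1 D2 have "r * r * inner (h (x + a1 *\<^sub>R u + b1 *\<^sub>R v) v) u
      = r * r * inner (h (x + a2 *\<^sub>R v + b2 *\<^sub>R u) u) v" by linarith
  with r have eq: "inner (h (x + a1 *\<^sub>R u + b1 *\<^sub>R v) v) u = inner (h (x + a2 *\<^sub>R v + b2 *\<^sub>R u) u) v"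
    by simp
  have "dist (inner (h (x + a1 *\<^sub>R u + b1 *\<^sub>R v) v) u) (inner (h x v) u) < \<epsilon>"
    using d1 close[OF ab1, of u v] unfolding \<delta>_def by simp
  moreover have "dist (inner (h (x + a2 *\<^sub>R v + b2 *\<^sub>R u) u) v) (inner (h x u) v) < \<epsilon>"
    using d2 close[OF ab2, of v u] unfolding \<delta>_def by simp
  ultimately have "\<bar>inner (h x v) u - inner (h x u) v\<bar> < 2 * \<epsilon>"
    using eq unfolding dist_real_def by linarith
  then show False unfolding \<epsilon>_def by simp
qed

lemma first_exit_time:
  fixes \<gamma> :: "real \<Rightarrow> 'a::topological_space"
  assumes "continuous_on {0..1} \<gamma>" "open S" "\<gamma> 1 \<notin> S"
  obtains ts where "0 \<le> ts" "ts \<le> 1" "\<gamma> ts \<notin> S" "\<And>t. 0 \<le> t \<Longrightarrow> t < ts \<Longrightarrow> \<gamma> t \<in> S"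
proof -
  let ?E = "{0..1} \<inter> \<gamma> -` (- S)"
  have "closed ?E" using assms(1,2) by (intro continuous_closed_preimage) auto
  then have "compact ?E" using compact_eq_bounded_closed bounded_Int bounded_closed_interval by blast
  moreover have "1 \<in> ?E" using assms(3) by simp
  ultimately obtain ts where ts: "ts \<in> ?E" and first: "\<forall>t\<in>?E. ts \<le> t"
    using compact_attains_inf[of ?E] by blast
  have "\<gamma> t \<in> S" if "0 \<le> t" "t < ts" for t
  proof (rule ccontr)
    assume "\<gamma> t \<notin> S"
    then have "t \<in> ?E" using that ts by auto
    then have "ts \<le> t" using first by blast
    then show False using that by simp
  qed
  then show ?thesis using that ts by auto
qed

lemma powr_three_halves: "(0::real) \<le> b \<Longrightarrow> b powr (3/2) = b * sqrt b"
proof (cases "b = 0")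
  case False
  assume "0 \<le> b"
  then have "b > 0" using False by simp
  have "b powr (3/2) = b powr 1 * b powr (1/2)" using powr_add[of b 1 "1/2"] by simp
  then show ?thesis using \<open>b > 0\<close> by (simp add: powr_half_sqrt)
qed simp

lemma interior_cone_scaleR:
  fixes S :: "'a::real_normed_vector set"
  assumes "cone S" and x: "x \<in> interior S" and c: "c > 0"
  shows "c *\<^sub>R x \<in> interior S"
proof -
  obtain e where e: "e > 0" "ball x e \<subseteq> S" using x by (meson mem_interior)
  have "ball (c *\<^sub>R x) (c * e) \<subseteq> S"
  proof
    fix y assume y: "y \<in> ball (c *\<^sub>R x) (c * e)"
    have "x - (1/c) *\<^sub>R y = (1/c) *\<^sub>R (c *\<^sub>R x - y)" using c by (simp add: algebra_simps)
    then have "dist x ((1/c) *\<^sub>R y) = dist (c *\<^sub>R x) y / c" using c by (simp add: dist_norm)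
    also have "\<dots> < e" using y c by (simp add: field_simps mult.commute)
    finally have "(1/c) *\<^sub>R y \<in> S" using e by auto
    then have "c *\<^sub>R ((1/c) *\<^sub>R y) \<in> S" using \<open>cone S\<close> c unfolding cone_def by (metis less_eq_real_def)
    then show "y \<in> S" using c by simp
  qed
  then show ?thesis using c e by (meson mem_interior mult_pos_pos)
qed

lemma interior_convex_cone_add:
  fixes S :: "'a::real_normed_vector set"
  assumes "convex S" "cone S" and x: "x \<in> interior S" and y: "y \<in> S"
  shows "x + y \<in> interior S"
proof -
  obtain e where e: "e > 0" "ball x e \<subseteq> S" using x by (meson mem_interior)
  have "ball (x + y) e \<subseteq> S"
  proof
    fix z assume "z \<in> ball (x + y) e"
    then have "z - y \<in> S" using e by (auto simp: dist_norm algebra_simps)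
    then show "z \<in> S" using y assms(1,2) convex_cone[of S] by (metis diff_add_cancel)
  qed
  then show ?thesis using e by (meson mem_interior)
qed

section \<open>Logarithmically homogeneous self-concordant barriers\<close>

locale cone_barrier =
  fixes K :: "'e::euclidean_space set" and F :: "'e \<Rightarrow> real" and g :: "'e \<Rightarrow> 'e"
    and h :: "'e \<Rightarrow> 'e \<Rightarrow> 'e" and d3 :: "'e \<Rightarrow> 'e \<Rightarrow> 'e \<Rightarrow> 'e" and \<nu> :: real
  assumes regular: "regular_cone K" and normal: "normal_barrier K F g h d3 \<nu>"
begin

lemma closed_K: "closed K" and convex_K: "convex K" and cone_K: "cone K"
  and pointed_K: "K \<inter> uminus ` K = {0}"
  using regular unfolding regular_cone_def by auto

lemma convex_interior: "convex (interior K)"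
  and interior_nonempty: "interior K \<noteq> {}"
  and barrier_derivative: "x \<in> interior K \<Longrightarrow> (F has_derivative (\<lambda>u. inner (g x) u)) (at x)"
  and gradient_derivative: "x \<in> interior K \<Longrightarrow> (g has_derivative h x) (at x)"
  and hessian_derivative: "x \<in> interior K \<Longrightarrow> ((\<lambda>y. h y u) has_derivative d3 x u) (at x)"
  and hessian_psd: "x \<in> interior K \<Longrightarrow> 0 \<le> inner (h x u) u"
  and barrier_at_frontier: "z \<in> frontier (interior K) \<Longrightarrow> filterlim F at_top (at z within interior K)"
  and self_concordant: "x \<in> interior K \<Longrightarrow> \<bar>inner (d3 x u u) u\<bar> \<le> 2 * (inner (h x u) u) powr (3/2)"
  and log_homogeneous: "x \<in> interior K \<Longrightarrow> \<tau> > 0 \<Longrightarrow> F (\<tau> *\<^sub>R x) = F x - \<nu> * ln \<tau>"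
  using normal unfolding normal_barrier_def sc_barrier_def by auto

lemma linear_hessian: "x \<in> interior K \<Longrightarrow> linear (h x)"
  using gradient_derivative has_derivative_linear by blast

lemma hessian_form_scaleR:
  "x \<in> interior K \<Longrightarrow> inner (h x (c *\<^sub>R u)) (c *\<^sub>R u) = c^2 * inner (h x u) u"
  using linear_hessian by (simp add: linear_scale power2_eq_square)

lemma hessian_form_uminus: "x \<in> interior K \<Longrightarrow> inner (h x (- u)) (- u) = inner (h x u) u"
  using linear_hessian by (simp add: linear_neg)

lemma interior_scaleR: "x \<in> interior K \<Longrightarrow> c > 0 \<Longrightarrow> c *\<^sub>R x \<in> interior K"
  using interior_cone_scaleR[OF cone_K] .

lemma interior_add_ray: "x \<in> interior K \<Longrightarrow> y \<in> K \<Longrightarrow> 0 \<le> t \<Longrightarrow> x + t *\<^sub>R y \<in> interior K"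
  using interior_convex_cone_add[OF convex_K cone_K] cone_K unfolding cone_def by blast

lemma interior_segment:
  assumes "a \<in> interior K" "b \<in> interior K" "0 \<le> t" "t \<le> 1"
  shows "a + t *\<^sub>R (b - a) \<in> interior K"
proof -
  have "(1 - t) *\<^sub>R a + t *\<^sub>R b \<in> interior K"
    using convex_interior assms unfolding convex_def by auto
  then show ?thesis by (simp add: algebra_simps)
qed

lemma barrier_line_derivative: "x + t *\<^sub>R y \<in> interior K \<Longrightarrow>
   ((\<lambda>t. F (x + t *\<^sub>R y)) has_real_derivative inner (g (x + t *\<^sub>R y)) y) (at t)"
  using has_real_derivative_along_line[OF barrier_derivative] .

lemma gradient_line_derivative: "x + t *\<^sub>R y \<in> interior K \<Longrightarrow>
   ((\<lambda>t. inner (g (x + t *\<^sub>R y)) u) has_real_derivative inner (h (x + t *\<^sub>R y) y) u) (at t)"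
  using has_real_derivative_along_line[OF has_derivative_inner_left[OF gradient_derivative]] .

lemma hessian_line_derivative: "x + t *\<^sub>R y \<in> interior K \<Longrightarrow>
   ((\<lambda>t. inner (h (x + t *\<^sub>R y) v) u) has_real_derivative inner (d3 (x + t *\<^sub>R y) v y) u) (at t)"
  using has_real_derivative_along_line[OF has_derivative_inner_left[OF hessian_derivative]] .

lemma gradient_scaleR:
  assumes x: "x \<in> interior K" and \<tau>: "\<tau> > 0"
  shows "g (\<tau> *\<^sub>R x) = (1/\<tau>) *\<^sub>R g x"
proof -
  have "((\<lambda>z. \<tau> *\<^sub>R z) has_derivative (\<lambda>u. \<tau> *\<^sub>R u)) (at x)" by (auto intro!: derivative_eq_intros)
  from has_derivative_compose[OF this barrier_derivative[OF interior_scaleR[OF x \<tau>]]]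
  have d1: "((\<lambda>z. F (\<tau> *\<^sub>R z)) has_derivative (\<lambda>u. inner (g (\<tau> *\<^sub>R x)) (\<tau> *\<^sub>R u))) (at x)" .
  have "((\<lambda>z. F z - \<nu> * ln \<tau>) has_derivative (\<lambda>u. inner (g x) u)) (at x)"
    using barrier_derivative[OF x] by (auto intro!: derivative_eq_intros)
  then have d2: "((\<lambda>z. F (\<tau> *\<^sub>R z)) has_derivative (\<lambda>u. inner (g x) u)) (at x)"
    by (rule has_derivative_transform_within_open[OF _ open_interior x]) (simp add: log_homogeneous \<tau>)
  from has_derivative_unique[OF d1 d2]
  have "\<And>u. inner (g (\<tau> *\<^sub>R x)) (\<tau> *\<^sub>R u) = inner (g x) u" by metis
  then have "\<And>u. inner (\<tau> *\<^sub>R g (\<tau> *\<^sub>R x) - g x) u = 0" by (simp add: inner_diff_left)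
  then have "\<tau> *\<^sub>R g (\<tau> *\<^sub>R x) = g x" by (metis inner_eq_zero_iff right_minus_eq)
  moreover have "g (\<tau> *\<^sub>R x) = (1/\<tau>) *\<^sub>R (\<tau> *\<^sub>R g (\<tau> *\<^sub>R x))" using \<tau> by simp
  ultimately show ?thesis by simp
qed

lemma gradient_inner_self: assumes x: "x \<in> interior K" shows "inner (g x) x = - \<nu>"
proof -
  have d1: "((\<lambda>t. F (x + t *\<^sub>R x)) has_real_derivative inner (g (x + 0 *\<^sub>R x)) x) (at 0)"
    by (rule barrier_line_derivative) (simp add: x)
  have d2: "((\<lambda>t. F x - \<nu> * ln (1 + t)) has_real_derivative - \<nu>) (at 0)"
    by (auto intro!: derivative_eq_intros)
  have "((\<lambda>t. F (x + t *\<^sub>R x)) has_real_derivative - \<nu>) (at 0)"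
  proof (rule has_field_derivative_transform_within_open[OF d2, of "{-1<..}"])
    fix t :: real assume "t \<in> {-1<..}"
    then have "F ((1 + t) *\<^sub>R x) = F x - \<nu> * ln (1 + t)" using log_homogeneous[OF x] by simp
    then show "F x - \<nu> * ln (1 + t) = F (x + t *\<^sub>R x)" by (simp add: algebra_simps)
  qed auto
  from DERIV_unique[OF d1 this] show ?thesis by simp
qed

lemma hessian_apply_self: assumes x: "x \<in> interior K" shows "h x x = - g x"
proof -
  have d1: "((\<lambda>t. g (x + t *\<^sub>R x)) has_vector_derivative h (x + 0 *\<^sub>R x) x) (at 0)"
    by (rule has_vector_derivative_along_line, rule gradient_derivative) (simp add: x)
  have "((\<lambda>t. 1 / (1 + t)) has_real_derivative -1) (at 0)"
    by (auto intro!: derivative_eq_intros)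
  from has_vector_derivative_scaleR[OF this has_vector_derivative_const[of "g x"]]
  have d2: "((\<lambda>t. (1 / (1 + t)) *\<^sub>R g x) has_vector_derivative - g x) (at 0)" by simp
  have "((\<lambda>t. g (x + t *\<^sub>R x)) has_vector_derivative - g x) (at 0)"
    unfolding has_vector_derivative_def
  proof (rule has_derivative_transform_within_open[OF d2[unfolded has_vector_derivative_def], of "{-1<..}"])
    fix t :: real assume "t \<in> {-1<..}"
    then have "g ((1 + t) *\<^sub>R x) = (1 / (1 + t)) *\<^sub>R g x" using gradient_scaleR[OF x] by simp
    then show "(1 / (1 + t)) *\<^sub>R g x = g (x + t *\<^sub>R x)" by (simp add: algebra_simps)
  qed auto
  from vector_derivative_unique_at[OF d1 this] show ?thesis by simp
qed

lemma hessian_form_self: "x \<in> interior K \<Longrightarrow> inner (h x x) x = \<nu>"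
  using hessian_apply_self gradient_inner_self by simp

lemma barrier_parameter_nonneg: "\<nu> \<ge> 0"
proof -
  obtain x where "x \<in> interior K" using interior_nonempty by auto
  then show ?thesis using hessian_form_self hessian_psd by metis
qed

lemma hessian_scaleR:
  assumes x: "x \<in> interior K" and \<tau>: "\<tau> > 0"
  shows "h (\<tau> *\<^sub>R x) u = (1/\<tau>^2) *\<^sub>R h x u"
proof -
  have \<tau>x: "\<tau> *\<^sub>R x \<in> interior K" using interior_scaleR[OF x \<tau>] .
  have "((\<lambda>z. \<tau> *\<^sub>R z) has_derivative (\<lambda>u. \<tau> *\<^sub>R u)) (at x)" by (auto intro!: derivative_eq_intros)
  from has_derivative_compose[OF this gradient_derivative[OF \<tau>x]]
  have d1: "((\<lambda>z. \<tau> *\<^sub>R g (\<tau> *\<^sub>R z)) has_derivative (\<lambda>u. \<tau> *\<^sub>R h (\<tau> *\<^sub>R x) (\<tau> *\<^sub>R u))) (at x)"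
    by (auto intro!: derivative_eq_intros)
  have d2: "((\<lambda>z. \<tau> *\<^sub>R g (\<tau> *\<^sub>R z)) has_derivative h x) (at x)"
    by (rule has_derivative_transform_within_open[OF gradient_derivative[OF x] open_interior x])
      (use \<tau> gradient_scaleR[OF _ \<tau>] in simp)
  from has_derivative_unique[OF d1 d2]
  have "\<tau> *\<^sub>R h (\<tau> *\<^sub>R x) (\<tau> *\<^sub>R u) = h x u" by metis
  moreover have "h (\<tau> *\<^sub>R x) (\<tau> *\<^sub>R u) = \<tau> *\<^sub>R h (\<tau> *\<^sub>R x) u"
    using linear_hessian[OF \<tau>x] by (simp add: linear_scale)
  ultimately have "(\<tau>^2) *\<^sub>R h (\<tau> *\<^sub>R x) u = h x u" by (simp add: power2_eq_square)
  moreover have "h (\<tau> *\<^sub>R x) u = (1/\<tau>^2) *\<^sub>R ((\<tau>^2) *\<^sub>R h (\<tau> *\<^sub>R x) u)" using \<tau> by simp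
  ultimately show ?thesis by simp
qed

lemma gradient_monotone:
  assumes a: "a \<in> interior K" and b: "b \<in> interior K"
  shows "inner (g a) (b - a) \<le> inner (g b) (b - a)"
proof -
  let ?f = "\<lambda>t. inner (g (a + t *\<^sub>R (b - a))) (b - a)"
  have "?f 0 \<le> ?f 1"
  proof (rule DERIV_nonneg_imp_nondecreasing[of 0 1 ?f])
    fix t :: real assume "0 \<le> t" "t \<le> 1"
    then have "a + t *\<^sub>R (b - a) \<in> interior K" using interior_segment a b by blast
    then show "\<exists>y. (?f has_real_derivative y) (at t) \<and> 0 \<le> y"
      using gradient_line_derivative hessian_psd by blast
  qed simp
  then show ?thesis by simp
qed

lemma barrier_convex:
  assumes a: "a \<in> interior K" and b: "b \<in> interior K"
  shows "F a + inner (g a) (b - a) \<le> F b"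
proof -
  let ?y = "b - a"
  have "\<exists>z. 0 < z \<and> z < 1 \<and> F (a + 1 *\<^sub>R ?y) - F (a + 0 *\<^sub>R ?y) = (1 - 0) * inner (g (a + z *\<^sub>R ?y)) ?y"
  proof (rule MVT2[of 0 1 "\<lambda>t. F (a + t *\<^sub>R ?y)" "\<lambda>t. inner (g (a + t *\<^sub>R ?y)) ?y"])
    fix t :: real assume "0 \<le> t" "t \<le> 1"
    then show "((\<lambda>t. F (a + t *\<^sub>R ?y)) has_real_derivative inner (g (a + t *\<^sub>R ?y)) ?y) (at t)"
      using interior_segment a b barrier_line_derivative by blast
  qed simp
  then obtain z where z: "0 < z" "z < 1" "F b - F a = inner (g (a + z *\<^sub>R ?y)) ?y" by auto
  have "a + z *\<^sub>R ?y \<in> interior K" using interior_segment a b z by auto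
  from gradient_monotone[OF a this]
  have "z * inner (g a) ?y \<le> z * inner (g (a + z *\<^sub>R ?y)) ?y" by simp
  then show ?thesis using z by simp
qed

text \<open>Scaling \<open>y\<close> by \<open>l\<close> leaves \<open>\<langle>\<nabla>F(l y), l y - z\<rangle> = -\<nu> - \<langle>\<nabla>F(y), z\<rangle>/l\<close> bounded, whereas
  \<open>\<langle>\<nabla>F(z), l y - z\<rangle>\<close> grows linearly in \<open>l\<close> if \<open>\<langle>\<nabla>F(z), y\<rangle> > 0\<close>; monotonicity of the
  gradient forbids this.\<close>

lemma gradient_inner_interior_nonpos:
  assumes z: "z \<in> interior K" and y: "y \<in> interior K"
  shows "inner (g z) y \<le> 0"
proof (rule ccontr)
  let ?a = "inner (g z) y" and ?c = "inner (g y) z"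
  assume "\<not> ?a \<le> 0"
  then have a: "?a > 0" by simp
  define l where "l = sqrt ((\<bar>?c\<bar> + 1) / ?a)"
  have l0: "l > 0" and l2: "l^2 * ?a = \<bar>?c\<bar> + 1" using a by (simp_all add: l_def)
  have ly: "l *\<^sub>R y \<in> interior K" using interior_scaleR[OF y l0] .
  have "l * ?a + \<nu> = inner (g z) (l *\<^sub>R y - z)"
    using gradient_inner_self[OF z] by (simp add: inner_diff_right)
  also have "\<dots> \<le> inner (g (l *\<^sub>R y)) (l *\<^sub>R y - z)" using gradient_monotone[OF z ly] .
  also have "\<dots> = - \<nu> - ?c / l"
    using gradient_inner_self[OF ly] gradient_scaleR[OF y l0] by (simp add: inner_diff_right)
  also have "\<dots> \<le> - \<nu> + \<bar>?c\<bar> / l" using l0 divide_right_mono[of "- ?c" "\<bar>?c\<bar>" l] by simp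
  finally have "l * ?a \<le> \<bar>?c\<bar> / l" using barrier_parameter_nonneg by linarith
  then have "l * (l * ?a) \<le> \<bar>?c\<bar>" using l0 by (simp add: field_simps)
  then show False using l2 by (simp add: power2_eq_square algebra_simps)
qed

lemma gradient_inner_cone_nonpos:
  assumes z: "z \<in> interior K" and y: "y \<in> K"
  shows "inner (g z) y \<le> 0"
proof (rule ccontr)
  let ?a = "inner (g z) y"
  assume "\<not> ?a \<le> 0"
  then have a: "?a > 0" by simp
  define e where "e = ?a / (\<nu> + 1)"
  have e0: "e > 0" using a barrier_parameter_nonneg by (simp add: e_def)
  have "e *\<^sub>R z + y \<in> interior K"
    using interior_convex_cone_add[OF convex_K cone_K interior_scaleR[OF z e0] y] .
  from gradient_inner_interior_nonpos[OF z this] have "?a \<le> e * \<nu>"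
    using gradient_inner_self[OF z] by (simp add: inner_add_right)
  moreover have "e * \<nu> < ?a" using a barrier_parameter_nonneg by (simp add: e_def field_simps)
  ultimately show False by simp
qed

lemma neg_gradient_in_dual_cone: "z \<in> interior K \<Longrightarrow> - g z \<in> dual_cone K"
  using gradient_inner_cone_nonpos unfolding dual_cone_def by fastforce

lemma local_norm_le_neg_gradient:
  assumes x: "x \<in> interior K" and y: "y \<in> K"
  shows "sqrt (inner (h x y) y) \<le> - inner (g x) y"
proof -
  define a where "a t = inner (g (x + t *\<^sub>R y)) y" for t
  define b where "b t = inner (h (x + t *\<^sub>R y) y) y" for t
  define b' where "b' t = inner (d3 (x + t *\<^sub>R y) y y) y" for t
  have inside: "x + t *\<^sub>R y \<in> interior K" if "0 \<le> t" for t using interior_add_ray x y that by blast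
  have a_deriv: "(a has_real_derivative b t) (at t)" if "0 \<le> t" for t
    unfolding a_def b_def using gradient_line_derivative inside that by blast
  have b_nonneg: "0 \<le> b t" if "0 \<le> t" for t unfolding b_def using hessian_psd inside that by blast
  have a_nonpos: "a t \<le> 0" if "0 \<le> t" for t
    unfolding a_def using gradient_inner_cone_nonpos inside that y by blast
  define r where "r = sqrt (b 0)"
  show ?thesis
  proof (cases "r = 0")
    case True
    then show ?thesis using a_nonpos[of 0] unfolding r_def a_def b_def by simp
  next
    case False
    then have r: "r > 0" and r2: "b 0 = r^2" using r_def b_nonneg[of 0] by simp_all
    have lower: "1 \<le> b T * (1/r + T)^2" if T: "0 \<le> T" for T
    proof (rule self_concordant_lower_bound[where b = b and b' = b', OF T r r2])
      fix t :: real assume t: "0 \<le> t" "t \<le> T"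
      show "(b has_real_derivative b' t) (at t)"
        unfolding b_def b'_def using hessian_line_derivative inside t by blast
      show "0 \<le> b t" using b_nonneg t by simp
      have "\<bar>b' t\<bar> \<le> 2 * (b t) powr (3/2)"
        unfolding b_def b'_def using self_concordant inside t by blast
      then show "- (2 * (b t * sqrt (b t))) \<le> b' t" using powr_three_halves[OF b_nonneg] t by simp
    qed
    from initial_slope_bound[OF r a_deriv a_nonpos lower] show ?thesis
      unfolding r_def a_def b_def by simp
  qed
qed

text \<open>The barrier blows up at the boundary, so it cannot stay bounded along a segment that
  leaves the interior.\<close>

lemma segment_endpoint_in_interior:
  assumes ts: "ts > 0"
    and inside: "\<And>t. 0 \<le> t \<Longrightarrow> t < ts \<Longrightarrow> x + t *\<^sub>R u \<in> interior K"
    and bounded: "\<And>t. 0 \<le> t \<Longrightarrow> t < ts \<Longrightarrow> F (x + t *\<^sub>R u) \<le> C"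
  shows "x + ts *\<^sub>R u \<in> interior K"
proof (rule ccontr)
  let ?z = "x + ts *\<^sub>R u"
  assume outside: "?z \<notin> interior K"
  have u: "u \<noteq> 0" using outside inside[of 0] ts by auto
  have near: "eventually (\<lambda>t. t \<in> {0<..<ts}) (at_left ts)"
    using eventually_at_left_real[OF ts] .
  have path: "((\<lambda>t. x + t *\<^sub>R u) \<longlongrightarrow> ?z) (at_left ts)"
    by (auto intro!: tendsto_eq_intros)
  have "eventually (\<lambda>t. x + t *\<^sub>R u \<in> interior K \<and> x + t *\<^sub>R u \<noteq> ?z) (at_left ts)"
    using near by eventually_elim (use inside u in auto)
  then have to_z: "filterlim (\<lambda>t. x + t *\<^sub>R u) (at ?z within interior K) (at_left ts)"
    using path by (simp add: filterlim_at)
  have "?z \<in> closure (interior K)"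
    by (rule Lim_in_closed_set[OF closed_closure _ trivial_limit_at_left_real path])
      (use near inside closure_subset[of "interior K"] in \<open>auto elim!: eventually_mono\<close>)
  then have "?z \<in> frontier (interior K)" using outside unfolding frontier_def by simp
  from filterlim_compose[OF barrier_at_frontier[OF this] to_z]
  have "eventually (\<lambda>t. C + 1 \<le> F (x + t *\<^sub>R u)) (at_left ts)"
    unfolding filterlim_at_top by blast
  then have "eventually (\<lambda>t. False) (at_left ts)"
    using near
  proof eventually_elim
    case (elim t)
    then show False using bounded[of t] by simp
  qed
  then show False by (simp add: trivial_limit_at_left_real)
qed

lemma barrier_bound_on_segment:
  assumes ts: "ts \<le> 1" and M: "0 \<le> M"
    and inside: "\<And>t. 0 \<le> t \<Longrightarrow> t < ts \<Longrightarrow> x + t *\<^sub>R u \<in> interior K"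
    and hess: "\<And>t. 0 \<le> t \<Longrightarrow> t < ts \<Longrightarrow> inner (h (x + t *\<^sub>R u) u) u \<le> M"
    and t: "0 \<le> t" "t < ts"
  shows "F (x + t *\<^sub>R u) \<le> F x + \<bar>inner (g x) u\<bar> + M"
proof -
  define a where "a s = inner (g (x + s *\<^sub>R u)) u" for s
  have slope: "a s \<le> a 0 + M * s" if s: "0 \<le> s" "s < ts" for s
  proof -
    have "(\<lambda>s. a 0 + M * s - a s) 0 \<le> (\<lambda>s. a 0 + M * s - a s) s"
    proof (rule DERIV_nonneg_imp_nondecreasing[OF s(1)])
      fix v assume v: "0 \<le> v" "v \<le> s"
      then have "((\<lambda>s. a 0 + M * s - a s) has_real_derivative M - inner (h (x + v *\<^sub>R u) u) u) (at v)"
        unfolding a_def using s inside by (auto intro!: derivative_eq_intros gradient_line_derivative)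
      moreover have "M - inner (h (x + v *\<^sub>R u) u) u \<ge> 0" using hess v s by simp
      ultimately show "\<exists>y. ((\<lambda>s. a 0 + M * s - a s) has_real_derivative y) (at v) \<and> 0 \<le> y" by blast
    qed
    then show ?thesis by simp
  qed
  let ?k = "\<lambda>s. F x + (\<bar>a 0\<bar> + M) * s - F (x + s *\<^sub>R u)"
  have "?k 0 \<le> ?k t"
  proof (rule DERIV_nonneg_imp_nondecreasing[OF t(1)])
    fix s assume s: "0 \<le> s" "s \<le> t"
    have "(?k has_real_derivative (\<bar>a 0\<bar> + M) - a s) (at s)"
      unfolding a_def using s t inside by (auto intro!: derivative_eq_intros barrier_line_derivative)
    moreover have "a s \<le> a 0 + M * s" using slope s t by simp
    moreover have "M * s \<le> M" using M s t ts mult_left_mono[of s 1 M] by simp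
    ultimately show "\<exists>y. (?k has_real_derivative y) (at s) \<and> 0 \<le> y"
      by (intro exI conjI) (assumption, linarith)
  qed
  then have "F (x + t *\<^sub>R u) \<le> F x + (\<bar>a 0\<bar> + M) * t" by simp
  also have "(\<bar>a 0\<bar> + M) * t \<le> (\<bar>a 0\<bar> + M) * 1" using t ts M by (intro mult_left_mono) auto
  finally show ?thesis unfolding a_def by simp
qed

lemma dikin_ellipsoid:
  assumes x: "x \<in> interior K" and u: "inner (h x u) u < 1"
  shows "x + u \<in> interior K"
proof (rule ccontr)
  assume outside: "x + u \<notin> interior K"
  define q where "q = inner (h x u) u"
  \<comment> \<open>any \<open>r\<close> with \<open>\<parallel>u\<parallel>\<^sub>x \<le> r < 1\<close> keeps the Hessian bound \<open>1/(1/r - t)\<^sup>2\<close> finite up to \<open>t = 1\<close>\<close>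
  define r where "r = (sqrt q + 1) / 2"
  have q0: "0 \<le> q" unfolding q_def using hessian_psd[OF x] .
  have sq: "0 \<le> sqrt q" "sqrt q < 1" using u q0 unfolding q_def by simp_all
  then have r: "0 < r" "r < 1" "sqrt q \<le> r" unfolding r_def by (simp_all add: add_nonneg_pos)
  then have "q \<le> r^2" by (intro sqrt_le_D) simp
  note r = r(1,2) this
  obtain ts where ts1: "0 \<le> ts" "ts \<le> 1" and exit: "x + ts *\<^sub>R u \<notin> interior K"
    and inside: "\<And>t. 0 \<le> t \<Longrightarrow> t < ts \<Longrightarrow> x + t *\<^sub>R u \<in> interior K"
    by (rule first_exit_time[of "\<lambda>t. x + t *\<^sub>R u" "interior K"])
      (use outside in \<open>auto intro!: continuous_intros\<close>)
  define M where "M = 1 / (1/r - 1)^2"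
  have gap: "0 < 1/r - 1" using r by (simp add: field_simps)
  have hess: "inner (h (x + t *\<^sub>R u) u) u \<le> M" if t: "0 \<le> t" "t < ts" for t
  proof -
    have "r * t < 1" using r t ts1 by (smt (verit) mult_left_le_one_le)
    then have "inner (h (x + t *\<^sub>R u) u) u \<le> 1 / (1/r - t)^2"
    proof (rule self_concordant_upper_bound[OF t(1) _ r(1)])
      show "inner (h (x + 0 *\<^sub>R u) u) u \<le> r^2" using r q_def by simp
      fix s assume s: "0 \<le> s" "s \<le> t"
      then have inside_s: "x + s *\<^sub>R u \<in> interior K" using inside t by simp
      then show "((\<lambda>s. inner (h (x + s *\<^sub>R u) u) u) has_real_derivative
          inner (d3 (x + s *\<^sub>R u) u u) u) (at s)" by (rule hessian_line_derivative)
      show "inner (d3 (x + s *\<^sub>R u) u u) u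
          \<le> 2 * (inner (h (x + s *\<^sub>R u) u) u * sqrt (inner (h (x + s *\<^sub>R u) u) u))"
        using self_concordant[OF inside_s, of u] powr_three_halves[OF hessian_psd[OF inside_s, of u]]
        by simp
    qed
    also have "\<dots> \<le> M" unfolding M_def
      using gap t ts1 by (intro divide_left_mono power_mono mult_pos_pos zero_less_power) auto
    finally show ?thesis .
  qed
  have "ts \<noteq> 0" using exit x by auto
  moreover have "M \<ge> 0" unfolding M_def by simp
  ultimately have "x + ts *\<^sub>R u \<in> interior K"
    using barrier_bound_on_segment[OF ts1(2) _ inside hess] ts1
    by (intro segment_endpoint_in_interior[OF _ inside]) auto
  then show False using exit by simp
qed

lemma dual_cone_le_local_norm:
  assumes x: "x \<in> interior K" and s: "s \<in> dual_cone K"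
  shows "inner s u \<le> inner s x * sqrt (inner (h x u) u)"
proof -
  have sx: "0 \<le> inner s x" using s x interior_subset unfolding dual_cone_def by blast
  have "(inner s u)^2 \<le> (inner s x)^2 * inner (h x u) u"
  proof (rule quadratic_le_of_sublevel_bound[where pa = "\<lambda>u. inner (h x u) u"])
    show "inner (h x (c *\<^sub>R u)) (c *\<^sub>R u) = c^2 * inner (h x u) u" for c u
      using hessian_form_scaleR[OF x] .
    show "(inner s (c *\<^sub>R u))^2 = c^2 * (inner s u)^2" for c u by (simp add: power_mult_distrib)
    show "0 \<le> inner (h x u) u" for u using hessian_psd[OF x] .
    fix u assume u: "inner (h x u) u < 1"
    have "x + u \<in> K" using dikin_ellipsoid[OF x u] interior_subset by blast
    moreover have "inner (h x (- u)) (- u) < 1" using u hessian_form_uminus[OF x, of u] by simp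
    then have "x + (- u) \<in> K" using dikin_ellipsoid[OF x] interior_subset by blast
    ultimately have "0 \<le> inner s (x + u)" "0 \<le> inner s (x - u)"
      using s unfolding dual_cone_def by auto
    then have "\<bar>inner s u\<bar> \<le> inner s x" by (simp add: inner_add_right inner_diff_right)
    then show "(inner s u)^2 \<le> (inner s x)^2" by (metis abs_ge_zero power2_abs power_mono)
  qed
  then have "sqrt ((inner s u)^2) \<le> sqrt ((inner s x)^2 * inner (h x u) u)"
    by (rule real_sqrt_le_mono)
  then show ?thesis using sx by (simp add: real_sqrt_mult)
qed

lemma hessian_pos_def:
  assumes x: "x \<in> interior K" and q: "inner (h x u) u = 0"
  shows "u = 0"
proof -
  have line: "x + t *\<^sub>R u \<in> K" for t
  proof -
    have "inner (h x (t *\<^sub>R u)) (t *\<^sub>R u) = 0"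
      using hessian_form_scaleR[OF x, of t u] q by (simp only: mult_zero_right)
    then have "inner (h x (t *\<^sub>R u)) (t *\<^sub>R u) < 1" by linarith
    then show ?thesis using dikin_ellipsoid[OF x] interior_subset by blast
  qed
  have "v \<in> K" if "v = u \<or> v = - u" for v
  proof (rule Lim_in_closed_set[OF closed_K _ trivial_limit_at_top_linorder])
    have "((\<lambda>t. inverse t *\<^sub>R x + v) \<longlongrightarrow> 0 *\<^sub>R x + v) at_top"
      by (intro tendsto_intros tendsto_inverse_0_at_top filterlim_ident)
    then show "((\<lambda>t. (1/t) *\<^sub>R x + v) \<longlongrightarrow> v) at_top" by (simp add: inverse_eq_divide)
    have "(1/t) *\<^sub>R (x + (if v = u then t else - t) *\<^sub>R u) \<in> K" if "t > 0" for t :: real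
      using cone_K line that unfolding cone_def by simp
    moreover have "(1/t) *\<^sub>R (x + (if v = u then t else - t) *\<^sub>R u) = (1/t) *\<^sub>R x + v"
      if "t > 0" for t :: real
      using that \<open>v = u \<or> v = - u\<close> by (auto simp: algebra_simps)
    ultimately have in_K: "(1/t) *\<^sub>R x + v \<in> K" if "t > 0" for t :: real using that by metis
    show "eventually (\<lambda>t. (1/t) *\<^sub>R x + v \<in> K) at_top"
      using eventually_gt_at_top[of "0::real"] by eventually_elim (rule in_K)
  qed
  then have "u \<in> K \<inter> uminus ` K" by (metis IntI image_eqI minus_minus)
  then show ?thesis using pointed_K by auto
qed

lemma hessian_surj:
  assumes x: "x \<in> interior K" shows "surj (h x)"
proof (rule linear_inj_imp_surj[OF linear_hessian[OF x]])
  have "u = 0" if "h x u = 0" for u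
    using hessian_pos_def[OF x, of u] that by simp
  then show "inj (h x)" using linear_injective_0[OF linear_hessian[OF x]] by blast
qed

lemma hessian_coercive:
  assumes x: "x \<in> interior K"
  obtains c where "c > 0" "\<And>y. c * norm y \<le> sqrt (inner (h x y) y)"
proof -
  let ?q = "\<lambda>u. inner (h x u) u"
  have "bounded_linear (h x)" using linear_hessian[OF x] linear_conv_bounded_linear by blast
  then have "continuous_on (sphere 0 1) ?q" by (intro continuous_intros linear_continuous_on)
  moreover obtain b :: 'e where "b \<in> Basis" using nonempty_Basis by blast
  then have "sphere (0::'e) 1 \<noteq> {}" by (metis norm_Basis mem_sphere_0 empty_iff)
  ultimately obtain u0 where u0: "u0 \<in> sphere 0 1" and min: "\<forall>y\<in>sphere 0 1. ?q u0 \<le> ?q y"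
    using continuous_attains_inf[OF compact_sphere] by blast
  have "u0 \<noteq> 0" using u0 by auto
  then have m: "?q u0 > 0" using hessian_pos_def[OF x, of u0] hessian_psd[OF x, of u0] by fastforce
  have "sqrt (?q u0) * norm y \<le> sqrt (?q y)" for y
  proof (cases "y = 0")
    case False
    define w where "w = (1 / norm y) *\<^sub>R y"
    have "w \<in> sphere 0 1" using False unfolding w_def by simp
    then have "?q u0 \<le> ?q w" using min by blast
    moreover have "?q y = (norm y)^2 * ?q w"
      using hessian_form_scaleR[OF x, of "norm y" w] False unfolding w_def by simp
    ultimately have "(norm y)^2 * ?q u0 \<le> ?q y" by (simp add: mult_left_mono)
    then have "sqrt ((norm y)^2 * ?q u0) \<le> sqrt (?q y)" by (rule real_sqrt_le_mono)
    then show ?thesis by (simp add: real_sqrt_mult mult.commute)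
  qed simp
  moreover have "sqrt (?q u0) > 0" using m by simp
  ultimately show ?thesis using that by blast
qed

lemma neg_gradient_in_interior_dual_cone:
  assumes z: "z \<in> interior K"
  shows "- g z \<in> interior (dual_cone K)"
proof -
  obtain c where c: "c > 0" "\<And>y. c * norm y \<le> sqrt (inner (h z y) y)"
    using hessian_coercive[OF z] by blast
  have "ball (- g z) c \<subseteq> dual_cone K"
  proof
    fix w assume w: "w \<in> ball (- g z) c"
    show "w \<in> dual_cone K" unfolding dual_cone_def
    proof (intro CollectI ballI)
      fix y assume y: "y \<in> K"
      have "\<bar>inner (w + g z) y\<bar> \<le> norm (w + g z) * norm y" by (rule Cauchy_Schwarz_ineq2)
      also have "\<dots> \<le> c * norm y"
        using w by (intro mult_right_mono) (auto simp: dist_norm norm_minus_commute add.commute)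
      also have "\<dots> \<le> - inner (g z) y" using c(2) local_norm_le_neg_gradient[OF z y] by (rule order_trans)
      finally show "0 \<le> inner w y" by (simp add: inner_add_left)
    qed
  qed
  then show ?thesis using c by (meson mem_interior)
qed

lemma barrier_parameter_pos: "\<nu> > 0"
proof (rule ccontr)
  assume "\<not> \<nu> > 0"
  then have "\<nu> = 0" using barrier_parameter_nonneg by simp
  obtain x where x: "x \<in> interior K" using interior_nonempty by auto
  then have "x = 0" using hessian_pos_def hessian_form_self \<open>\<nu> = 0\<close> by simp
  then obtain e where e: "e > 0" "ball 0 e \<subseteq> K" using x by (meson mem_interior)
  obtain b :: 'e where "b \<in> Basis" using nonempty_Basis by blast
  define y where "y = (e/2) *\<^sub>R b"
  have ny: "norm y = e / 2" using \<open>b \<in> Basis\<close> e unfolding y_def by simp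
  then have "y \<in> K" "- y \<in> K" using e by (auto simp: subset_iff)
  then have "y \<in> K \<inter> uminus ` K" by (metis IntI image_eqI minus_minus)
  then show False using pointed_K ny e by auto
qed

lemma hessian_sym:
  assumes x: "x \<in> interior K" shows "inner (h x v) u = inner (h x u) v"
proof (rule hessian_symmetric[OF open_interior x barrier_derivative gradient_derivative])
  show "isCont (\<lambda>y. inner (h y v) u) x" for u v
    using has_derivative_continuous[OF has_derivative_inner_left[OF hessian_derivative[OF x]]] .
qed

text \<open>Two-sided bound via the parallelogram law: both \<open>c \<plusminus> u\<close> lie in \<open>K\<close>, where the local
  norm is dominated by the linear functional \<open>-\<nabla>F(p)\<close>.\<close>

lemma hessian_form_le_gradient_square:
  assumes p: "p \<in> interior K" and c: "c + u \<in> interior K" "c - u \<in> interior K"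
  shows "inner (h p u) u \<le> 2 * (inner (- g p) c)^2"
proof -
  let ?q = "\<lambda>y. inner (h p y) y"
  have sq_le: "?q y \<le> (inner (- g p) y)^2" and nonneg: "0 \<le> inner (- g p) y"
    if "y \<in> interior K" for y
  proof -
    have le: "sqrt (?q y) \<le> inner (- g p) y"
      using local_norm_le_neg_gradient[OF p] that interior_subset by auto
    then show "?q y \<le> (inner (- g p) y)^2" by (rule sqrt_le_D)
    have "0 \<le> sqrt (?q y)" using hessian_psd[OF p, of y] by simp
    with le show "0 \<le> inner (- g p) y" by linarith
  qed
  have "?q (c + u) + ?q (c - u) = 2 * ?q c + 2 * ?q u"
    using linear_hessian[OF p] by (simp add: linear_add linear_diff inner_add_left inner_add_right
        inner_diff_left inner_diff_right)
  moreover have "(inner (- g p) (c + u))^2 + (inner (- g p) (c - u))^2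
      \<le> (inner (- g p) (c + u) + inner (- g p) (c - u))^2"
  proof -
    have "a^2 + b^2 \<le> (a + b)^2" if "0 \<le> a" "0 \<le> b" for a b :: real
      using that by (simp add: power2_eq_square algebra_simps)
    then show ?thesis using nonneg[OF c(1)] nonneg[OF c(2)] by blast
  qed
  moreover have "(inner (- g p) (c + u) + inner (- g p) (c - u))^2 = (2 * inner (- g p) c)^2"
    by (simp add: inner_add_right inner_diff_right)
  ultimately have "2 * ?q c + 2 * ?q u \<le> (2 * inner (- g p) c)^2"
    using sq_le[OF c(1)] sq_le[OF c(2)] by linarith
  then show ?thesis using hessian_psd[OF p, of c] by (simp add: power2_eq_square algebra_simps)
qed

lemma hessian_form_comparison:
  assumes p: "p \<in> interior K" and c: "c \<in> interior K"
  shows "inner (h p u) u \<le> 2 * (inner (- g p) c)^2 * inner (h c u) u"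
proof (rule quadratic_le_of_sublevel_bound[where pa = "\<lambda>u. inner (h c u) u"])
  show "inner (h c (t *\<^sub>R u)) (t *\<^sub>R u) = t^2 * inner (h c u) u" for t u
    using hessian_form_scaleR[OF c] .
  show "inner (h p (t *\<^sub>R u)) (t *\<^sub>R u) = t^2 * inner (h p u) u" for t u
    using hessian_form_scaleR[OF p] .
  show "0 \<le> inner (h c u) u" for u using hessian_psd[OF c] .
  fix u assume u: "inner (h c u) u < 1"
  then have "inner (h c (- u)) (- u) < 1" using hessian_form_uminus[OF c] by simp
  then have "c + u \<in> interior K" "c - u \<in> interior K"
    using dikin_ellipsoid[OF c] u by (auto simp: diff_conv_add_uminus simp del: add_uminus_conv_diff)
  then show "inner (h p u) u \<le> 2 * (inner (- g p) c)^2"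
    using hessian_form_le_gradient_square[OF p] by blast
qed

section \<open>The conjugate barrier\<close>

text \<open>For small \<open>\<epsilon> > 0\<close> still \<open>t + \<epsilon>\<nabla>F(z) \<in> K\<^sup>*\<close>, so the objective at \<open>t\<close> is dominated by the
  one at \<open>-\<nabla>F(z)\<close> evaluated at \<open>\<epsilon>x\<close>, which convexity bounds by its value at \<open>z\<close>.\<close>

lemma conjugate_bdd_above:
  assumes t: "t \<in> interior (dual_cone K)"
  shows "bdd_above ((\<lambda>x. - inner t x - F x) ` interior K)"
proof -
  obtain z where z: "z \<in> interior K" using interior_nonempty by auto
  obtain \<delta> where \<delta>: "\<delta> > 0" "ball t \<delta> \<subseteq> dual_cone K" using t by (meson mem_interior)
  define \<epsilon> where "\<epsilon> = \<delta> / (2 * (norm (g z) + 1))"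
  have \<epsilon>: "\<epsilon> > 0" using \<delta> unfolding \<epsilon>_def by (simp add: add_nonneg_pos)
  have "norm (g z) / (2 * (norm (g z) + 1)) < 1" by (simp add: add_nonneg_pos)
  then have "\<delta> * (norm (g z) / (2 * (norm (g z) + 1))) < \<delta> * 1"
    using \<delta> by (intro mult_strict_left_mono) auto
  then have "\<epsilon> * norm (g z) < \<delta>" unfolding \<epsilon>_def by simp
  then have "t + \<epsilon> *\<^sub>R g z \<in> ball t \<delta>" using \<epsilon> by (simp add: dist_norm)
  then have "t + \<epsilon> *\<^sub>R g z \<in> dual_cone K" using \<delta> by blast
  have "- inner t x - F x \<le> - \<nu> - F z - \<nu> * ln \<epsilon>" if x: "x \<in> interior K" for x
  proof -
    have \<epsilon>x: "\<epsilon> *\<^sub>R x \<in> interior K" using interior_scaleR[OF x \<epsilon>] .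
    have "0 \<le> inner (t + \<epsilon> *\<^sub>R g z) x"
      using \<open>t + \<epsilon> *\<^sub>R g z \<in> dual_cone K\<close> x interior_subset unfolding dual_cone_def by blast
    moreover have "F z + inner (g z) (\<epsilon> *\<^sub>R x - z) \<le> F (\<epsilon> *\<^sub>R x)" using barrier_convex[OF z \<epsilon>x] .
    moreover have "F (\<epsilon> *\<^sub>R x) = F x - \<nu> * ln \<epsilon>" using log_homogeneous[OF x \<epsilon>] .
    ultimately show ?thesis using gradient_inner_self[OF z]
      by (simp add: inner_add_left inner_diff_right)
  qed
  then show ?thesis by (intro bdd_aboveI2) blast
qed

end

locale conjugate_barrier = cone_barrier +
  fixes Fs :: "'e::euclidean_space \<Rightarrow> real" and gFs :: "'e \<Rightarrow> 'e" and hFs :: "'e \<Rightarrow> 'e \<Rightarrow> 'e"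
  assumes conjugate: "\<forall>s\<in>interior (dual_cone K). Fs s = (SUP x\<in>interior K. - inner s x - F x)"
    and conjugate_derivative:
      "\<forall>s\<in>interior (dual_cone K). (Fs has_derivative (\<lambda>u. inner (gFs s) u)) (at s)"
    and conjugate_gradient_derivative: "\<forall>s\<in>interior (dual_cone K). (gFs has_derivative hFs s) (at s)"
begin

lemma conjugate_lower_bound:
  "t \<in> interior (dual_cone K) \<Longrightarrow> z \<in> interior K \<Longrightarrow> - inner t z - F z \<le> Fs t"
  using conjugate conjugate_bdd_above by (auto intro: cSUP_upper)

lemma conjugate_at_neg_gradient:
  assumes z: "z \<in> interior K"
  shows "Fs (- g z) = inner (g z) z - F z"
proof -
  have "- inner (- g z) x - F x \<le> - inner (- g z) z - F z" if "x \<in> interior K" for x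
    using barrier_convex[OF z that] by (simp add: inner_diff_right)
  then show ?thesis
    using conjugate neg_gradient_in_interior_dual_cone[OF z] z by (auto intro!: cSup_eq_maximum)
qed

text \<open>\<open>t \<mapsto> F\<^sub>*(t) + \<langle>t, z\<rangle>\<close> is minimised at \<open>t = -\<nabla>F(z)\<close>, so its derivative vanishes there.\<close>

lemma conjugate_gradient_at_neg_gradient:
  assumes z: "z \<in> interior K"
  shows "gFs (- g z) = - z"
proof -
  define s where "s = - g z"
  have s: "s \<in> interior (dual_cone K)" unfolding s_def using neg_gradient_in_interior_dual_cone[OF z] .
  define e where "e t = Fs t + inner t z" for t
  have "(e has_derivative (\<lambda>w. inner (gFs s) w + inner w z)) (at s)"
    unfolding e_def using conjugate_derivative s by (auto intro!: derivative_eq_intros)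
  moreover have "e s \<le> e t" if "t \<in> interior (dual_cone K)" for t
    using conjugate_lower_bound[OF that z] conjugate_at_neg_gradient[OF z] unfolding e_def s_def
    by simp
  ultimately have "(\<lambda>w. inner (gFs s) w + inner w z) = (\<lambda>w. 0)"
    using differential_zero_maxmin[OF s open_interior] by blast
  then have "inner (gFs s + z) (gFs s + z) = 0"
    by (metis inner_add_left inner_commute)
  then show ?thesis unfolding s_def by (simp add: eq_neg_iff_add_eq_0)
qed

lemma conjugate_hessian_inverse:
  assumes z: "z \<in> interior K"
  shows "hFs (- g z) (h z v) = v"
proof -
  have "((\<lambda>y. - g y) has_derivative (\<lambda>v. - h z v)) (at z)"
    using gradient_derivative[OF z] by (auto intro!: derivative_eq_intros)
  moreover have hFs: "(gFs has_derivative hFs (- g z)) (at (- g z))"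
    using conjugate_gradient_derivative neg_gradient_in_interior_dual_cone[OF z] by blast
  ultimately have d1: "((\<lambda>y. gFs (- g y)) has_derivative (\<lambda>v. hFs (- g z) (- h z v))) (at z)"
    by (rule has_derivative_compose)
  have d2: "((\<lambda>y. gFs (- g y)) has_derivative (\<lambda>v. - v)) (at z)"
  proof (rule has_derivative_transform_within_open[OF _ open_interior z])
    show "((\<lambda>y. - y) has_derivative (\<lambda>v. - v)) (at z)" by (auto intro!: derivative_eq_intros)
  qed (simp add: conjugate_gradient_at_neg_gradient)
  from has_derivative_unique[OF d1 d2] have "hFs (- g z) (- h z v) = - v" by metis
  then show ?thesis using has_derivative_linear[OF hFs] by (simp add: linear_neg)
qed

end

section \<open>The central path\<close>

locale central_path = conjugate_barrier +
  fixes A :: "'e::euclidean_space \<Rightarrow> 'h::euclidean_space" and b :: 'h and c :: 'e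
    and xp sp :: "real \<Rightarrow> 'e" and yp :: "real \<Rightarrow> 'h"
  assumes linear_A: "linear A"
    and on_path: "\<forall>\<mu>>0. xp \<mu> \<in> interior K \<and> A (xp \<mu>) = b \<and> sp \<mu> + adjoint A (yp \<mu>) = c
                      \<and> sp \<mu> = - \<mu> *\<^sub>R g (xp \<mu>)"
begin

abbreviation B :: "'e \<Rightarrow> 'e" where "B \<equiv> h (xp 1)"

lemma primal_in_interior: "\<mu> > 0 \<Longrightarrow> xp \<mu> \<in> interior K"
  and dual_eq: "\<mu> > 0 \<Longrightarrow> sp \<mu> = - \<mu> *\<^sub>R g (xp \<mu>)"
  using on_path by blast+

lemma dual_eq_scaled: "\<mu> > 0 \<Longrightarrow> sp \<mu> = - g ((1/\<mu>) *\<^sub>R xp \<mu>)"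
  using dual_eq gradient_scaleR[OF primal_in_interior, of \<mu> "1/\<mu>"] by simp

lemma dual_in_dual_cone: "\<mu> > 0 \<Longrightarrow> sp \<mu> \<in> dual_cone K"
  using dual_eq_scaled neg_gradient_in_dual_cone interior_scaleR primal_in_interior
  by (metis divide_pos_pos zero_less_one)

lemma pairing_nonneg: "\<mu> > 0 \<Longrightarrow> \<mu>' > 0 \<Longrightarrow> 0 \<le> inner (sp \<mu>) (xp \<mu>')"
  using dual_in_dual_cone primal_in_interior interior_subset unfolding dual_cone_def by blast

lemma pairing_self: "\<mu> > 0 \<Longrightarrow> inner (sp \<mu>) (xp \<mu>) = \<nu> * \<mu>"
  using dual_eq gradient_inner_self primal_in_interior by simp

text \<open>Primal and dual steps along the path lie in \<open>ker A\<close> and \<open>range A\<^sup>*\<close>.\<close>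

lemma path_orthogonal:
  assumes "\<mu> > 0" "\<mu>' > 0"
  shows "inner (sp \<mu> - sp \<mu>') (xp \<mu> - xp \<mu>') = 0"
proof -
  have "sp \<mu> + adjoint A (yp \<mu>) = c" "sp \<mu>' + adjoint A (yp \<mu>') = c"
    using on_path assms by blast+
  then have "sp \<mu> - sp \<mu>' = adjoint A (yp \<mu>') - adjoint A (yp \<mu>)" by (simp add: algebra_simps)
  also have "\<dots> = adjoint A (yp \<mu>' - yp \<mu>)"
    using adjoint_linear[OF linear_A] by (simp add: linear_diff)
  finally have "sp \<mu> - sp \<mu>' = adjoint A (yp \<mu>' - yp \<mu>)" .
  moreover have "A (xp \<mu> - xp \<mu>') = 0" using on_path assms linear_A by (simp add: linear_diff)
  ultimately show ?thesis using adjoint_works[OF linear_A] by (simp add: inner_commute)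
qed

lemma primal_pairing_le:
  assumes \<mu>: "0 < \<mu>1" "\<mu>1 \<le> \<mu>0"
  shows "inner (sp \<mu>0) (xp \<mu>1) \<le> \<nu> * \<mu>0"
proof (cases "\<mu>1 = \<mu>0")
  case False
  have \<mu>0: "\<mu>0 > 0" using \<mu> by simp
  define E where "E = inner (sp \<mu>0) (xp \<mu>0 - xp \<mu>1)"
  have orth: "inner (sp \<mu>1) (xp \<mu>0 - xp \<mu>1) = E"
    using path_orthogonal[OF \<mu>0 \<mu>(1)] unfolding E_def by (simp add: inner_diff_left)
  have "inner (g (xp \<mu>1)) (xp \<mu>0 - xp \<mu>1) \<le> inner (g (xp \<mu>0)) (xp \<mu>0 - xp \<mu>1)"
    using gradient_monotone primal_in_interior \<mu> \<mu>0 by blast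
  moreover have "g (xp \<mu>1) = - (1/\<mu>1) *\<^sub>R sp \<mu>1" "g (xp \<mu>0) = - (1/\<mu>0) *\<^sub>R sp \<mu>0"
    using dual_eq \<mu> \<mu>0 by simp_all
  ultimately have "- (1/\<mu>1) * E \<le> - (1/\<mu>0) * E" using orth unfolding E_def by simp
  then have "E * (1/\<mu>0 - 1/\<mu>1) \<le> 0" by (simp add: algebra_simps)
  moreover have "1/\<mu>0 < 1/\<mu>1" using \<mu> False by (simp add: frac_less2)
  ultimately have "E \<ge> 0" by (simp add: mult_le_0_iff)
  then show ?thesis using pairing_self[OF \<mu>0] unfolding E_def by (simp add: inner_diff_right)
qed (use pairing_self \<mu> in simp)

lemma dual_pairing_le:
  assumes \<mu>: "0 < \<mu>1" "\<mu>1 \<le> \<mu>0"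
  shows "inner (sp \<mu>1) (xp \<mu>0) \<le> \<nu> * \<mu>0"
proof (cases "\<mu>1 = \<mu>0")
  case False
  have \<mu>0: "\<mu>0 > 0" using \<mu> by simp
  define y0 y1 where "y0 = (1/\<mu>0) *\<^sub>R xp \<mu>0" and "y1 = (1/\<mu>1) *\<^sub>R xp \<mu>1"
  define E where "E = inner (sp \<mu>0 - sp \<mu>1) (xp \<mu>0)"
  have orth: "inner (sp \<mu>0 - sp \<mu>1) (xp \<mu>0) = inner (sp \<mu>0 - sp \<mu>1) (xp \<mu>1)"
    using path_orthogonal[OF \<mu>0 \<mu>(1)] by (simp add: inner_diff_right)
  have "inner (g y1) (y0 - y1) \<le> inner (g y0) (y0 - y1)"
    using gradient_monotone interior_scaleR primal_in_interior \<mu> \<mu>0 unfolding y0_def y1_def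
    by (metis divide_pos_pos zero_less_one)
  moreover have "g y0 = - sp \<mu>0" "g y1 = - sp \<mu>1"
    using dual_eq_scaled \<mu> \<mu>0 unfolding y0_def y1_def by simp_all
  ultimately have "inner (sp \<mu>0 - sp \<mu>1) (y0 - y1) \<le> 0" by (simp add: inner_diff_left)
  moreover have "inner (sp \<mu>0 - sp \<mu>1) (y0 - y1) = E / \<mu>0 - E / \<mu>1"
    unfolding E_def y0_def y1_def inner_diff_right inner_scaleR_right orth[symmetric] by simp
  ultimately have "E * (1/\<mu>0 - 1/\<mu>1) \<le> 0" by (simp add: right_diff_distrib)
  moreover have "1/\<mu>0 < 1/\<mu>1" using \<mu> False by (simp add: frac_less2)
  ultimately have "E \<ge> 0" by (simp add: mult_le_0_iff)
  then show ?thesis using pairing_self[OF \<mu>0] unfolding E_def by (simp add: inner_diff_left)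
qed (use pairing_self \<mu> in simp)

lemma dual_hessian_on_path:
  assumes \<mu>: "\<mu> > 0"
  shows "(\<mu>^2) *\<^sub>R h (xp \<mu>) (hFs (sp \<mu>) w) = w"
proof -
  define z where "z = (1/\<mu>) *\<^sub>R xp \<mu>"
  have z: "z \<in> interior K" unfolding z_def using interior_scaleR primal_in_interior \<mu> by simp
  have hz: "h z v = (\<mu>^2) *\<^sub>R h (xp \<mu>) v" for v
    unfolding z_def using hessian_scaleR[OF primal_in_interior, of \<mu> "1/\<mu>"] \<mu> by (simp add: power_one_over)
  obtain v where v: "w = h z v" using hessian_surj[OF z] by (metis surj_def)
  have "hFs (sp \<mu>) w = v"
    using conjugate_hessian_inverse[OF z] dual_eq_scaled[OF \<mu>] v unfolding z_def by simp
  then show ?thesis using v hz by simp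
qed

lemma primal_local_norm_bound:
  assumes \<mu>: "0 < \<mu>1" "\<mu>1 \<le> \<mu>0"
  shows "sqrt (inner (h (xp \<mu>0) (xp \<mu>1)) (xp \<mu>1)) \<le> \<nu>"
proof -
  have \<mu>0: "\<mu>0 > 0" using \<mu> by simp
  have "sqrt (inner (h (xp \<mu>0) (xp \<mu>1)) (xp \<mu>1)) \<le> - inner (g (xp \<mu>0)) (xp \<mu>1)"
    using local_norm_le_neg_gradient primal_in_interior \<mu>0 \<mu>(1) interior_subset by blast
  also have "\<dots> = inner (sp \<mu>0) (xp \<mu>1) / \<mu>0" using dual_eq[OF \<mu>0] \<mu>0 by simp
  also have "\<dots> \<le> \<nu>" using primal_pairing_le[OF \<mu>] \<mu>0 by (simp add: pos_divide_le_eq mult.commute)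
  finally show ?thesis .
qed

lemma dual_local_norm_bound:
  assumes \<mu>: "0 < \<mu>1" "\<mu>1 \<le> \<mu>0"
  shows "sqrt (inner (hFs (sp \<mu>0) (sp \<mu>1)) (sp \<mu>1)) \<le> \<nu>"
proof -
  have \<mu>0: "\<mu>0 > 0" using \<mu> by simp
  define v where "v = hFs (sp \<mu>0) (sp \<mu>1)"
  define q where "q = inner (h (xp \<mu>0) v) v"
  have q: "q \<ge> 0" unfolding q_def using hessian_psd primal_in_interior[OF \<mu>0] by simp
  have "inner (sp \<mu>1) v = inner ((\<mu>0^2) *\<^sub>R h (xp \<mu>0) v) v"
    using dual_hessian_on_path[OF \<mu>0, of "sp \<mu>1"] unfolding v_def by simp
  then have vs: "inner (sp \<mu>1) v = \<mu>0^2 * q" unfolding q_def by simp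
  have "inner (sp \<mu>1) v \<le> inner (sp \<mu>1) (xp \<mu>0) * sqrt q"
    unfolding q_def using dual_cone_le_local_norm primal_in_interior[OF \<mu>0] dual_in_dual_cone[OF \<mu>(1)] .
  also have "\<dots> \<le> \<nu> * \<mu>0 * sqrt q" using dual_pairing_le[OF \<mu>] q by (intro mult_right_mono) auto
  finally have "sqrt (\<mu>0^2 * q) \<le> \<nu>"
    using vs \<mu>0 q barrier_parameter_nonneg by (intro sqrt_le_of_le_mult_sqrt) (auto simp: ac_simps)
  then show ?thesis using vs unfolding v_def by (simp add: inner_commute)
qed

lemma primal_limit_point_bound:
  assumes "limit_point_at0 xp x"
  shows "op_norm_B B x \<le> \<nu>"
proof -
  obtain m :: "nat \<Rightarrow> real" where m: "\<forall>k. 0 < m k" "m \<longlonglongrightarrow> 0" "(\<lambda>k. xp (m k)) \<longlonglongrightarrow> x"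
    using assms unfolding limit_point_at0_def by blast
  have x1: "xp 1 \<in> interior K" using primal_in_interior by simp
  have "bounded_linear B" using linear_hessian[OF x1] linear_conv_bounded_linear by blast
  then have "(\<lambda>k. inner (B (xp (m k))) (xp (m k))) \<longlonglongrightarrow> inner (B x) x"
    by (intro tendsto_intros bounded_linear.tendsto[OF \<open>bounded_linear B\<close>] m(3))
  moreover have "eventually (\<lambda>k. m k < 1) sequentially" using m(2) by (rule order_tendstoD) simp
  then have "eventually (\<lambda>k. inner (B (xp (m k))) (xp (m k)) \<le> \<nu>^2) sequentially"
  proof eventually_elim
    case (elim k)
    have "sqrt (inner (B (xp (m k))) (xp (m k))) \<le> \<nu>"
      using primal_local_norm_bound[of "m k" 1] m(1) elim by simp
    then show ?case by (rule sqrt_le_D)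
  qed
  ultimately have "inner (B x) x \<le> \<nu>^2" by (rule tendsto_upperbound) simp
  from real_sqrt_le_mono[OF this] show ?thesis
    unfolding op_norm_B_def using barrier_parameter_nonneg by simp
qed

lemma dual_limit_point_bound:
  assumes "limit_point_at0 sp s"
  shows "op_norm_B (inv B) s \<le> \<nu>"
proof -
  obtain m :: "nat \<Rightarrow> real" where m: "\<forall>k. 0 < m k" "m \<longlonglongrightarrow> 0" "(\<lambda>k. sp (m k)) \<longlonglongrightarrow> s"
    using assms unfolding limit_point_at0_def by blast
  have x1: "xp 1 \<in> interior K" using primal_in_interior by simp
  define u where "u = inv B s"
  have Bu: "B u = s" unfolding u_def using hessian_surj[OF x1] by (simp add: surj_f_inv_f)
  define q where "q = inner (B u) u"
  have q: "q \<ge> 0" unfolding q_def using hessian_psd[OF x1] .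
  have "(\<lambda>k. inner (sp (m k)) u) \<longlonglongrightarrow> inner s u" by (intro tendsto_intros m(3))
  moreover have "eventually (\<lambda>k. m k < 1) sequentially" using m(2) by (rule order_tendstoD) simp
  then have "eventually (\<lambda>k. inner (sp (m k)) u \<le> \<nu> * sqrt q) sequentially"
  proof eventually_elim
    case (elim k)
    have "inner (sp (m k)) u \<le> inner (sp (m k)) (xp 1) * sqrt q"
      unfolding q_def using dual_cone_le_local_norm[OF x1 dual_in_dual_cone] m(1) by simp
    also have "\<dots> \<le> \<nu> * sqrt q"
      using dual_pairing_le[of "m k" 1] m(1) elim q by (intro mult_right_mono) auto
    finally show ?case .
  qed
  ultimately have "inner s u \<le> \<nu> * sqrt q" by (rule tendsto_upperbound) simp
  then have "1^2 * q \<le> \<nu> * 1 * sqrt q" using Bu unfolding q_def by (simp add: inner_commute)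
  from sqrt_le_of_le_mult_sqrt[OF _ q barrier_parameter_nonneg this] have "sqrt q \<le> \<nu>" by simp
  then show ?thesis unfolding op_norm_B_def q_def using Bu u_def by (simp add: inner_commute)
qed

lemma hessian_at_one_le:
  assumes \<mu>: "0 < \<mu>" "\<mu> \<le> 1"
  shows "inner (B u) u \<le> 2 * \<nu>^2 * inner (h (xp \<mu>) u) u"
proof -
  have "inner (B u) u \<le> 2 * (inner (sp 1) (xp \<mu>))^2 * inner (h (xp \<mu>) u) u"
    using hessian_form_comparison[OF primal_in_interior primal_in_interior] \<mu> dual_eq[of 1] by simp
  also have "\<dots> \<le> 2 * \<nu>^2 * inner (h (xp \<mu>) u) u"
    using primal_pairing_le[OF \<mu>] pairing_nonneg[of 1 \<mu>] \<mu> hessian_psd[OF primal_in_interior]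
    by (intro mult_right_mono mult_left_mono power_mono) auto
  finally show ?thesis .
qed

lemma hessian_le_at_one:
  assumes \<mu>: "0 < \<mu>" "\<mu> \<le> 1"
  shows "inner (h (xp \<mu>) u) u \<le> 2 * \<nu>^2 / \<mu>^2 * inner (B u) u"
proof -
  have "inner (h (xp \<mu>) u) u \<le> 2 * (inner (sp \<mu>) (xp 1) / \<mu>)^2 * inner (B u) u"
    using hessian_form_comparison[OF primal_in_interior primal_in_interior] \<mu> dual_eq[of \<mu>] by simp
  also have "\<dots> \<le> 2 * (\<nu> / \<mu>)^2 * inner (B u) u"
    using dual_pairing_le[OF \<mu>] pairing_nonneg[of \<mu> 1] \<mu> hessian_psd[OF primal_in_interior]
    by (intro mult_right_mono mult_left_mono power_mono divide_right_mono) auto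
  finally show ?thesis by (simp add: power_divide)
qed

lemma hessian_loewner_lower:
  assumes \<mu>: "0 < \<mu>" "\<mu> \<le> 1"
  shows "loewner_le (\<lambda>u. (1 / (4 * \<nu>\<^sup>2)) *\<^sub>R B u) (h (xp \<mu>))"
  unfolding loewner_le_def
proof
  fix u
  have \<nu>: "\<nu>^2 > 0" using barrier_parameter_pos by simp
  have "inner ((1 / (4 * \<nu>\<^sup>2)) *\<^sub>R B u) u = inner (B u) u / (4 * \<nu>^2)" by simp
  also have "\<dots> \<le> 2 * \<nu>^2 * inner (h (xp \<mu>) u) u / (4 * \<nu>^2)"
    using hessian_at_one_le[OF \<mu>, of u] \<nu> by (intro divide_right_mono) auto
  also have "\<dots> = inner (h (xp \<mu>) u) u / 2" using \<nu> by simp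
  also have "\<dots> \<le> inner (h (xp \<mu>) u) u"
    using hessian_psd[OF primal_in_interior[OF \<mu>(1)], of u] by simp
  finally show "inner ((1 / (4 * \<nu>\<^sup>2)) *\<^sub>R B u) u \<le> inner (h (xp \<mu>) u) u" .
qed

lemma hessian_loewner_upper:
  assumes \<mu>: "0 < \<mu>" "\<mu> \<le> 1"
  shows "loewner_le (h (xp \<mu>)) (\<lambda>u. (4 * \<nu>\<^sup>2 / \<mu>\<^sup>2) *\<^sub>R B u)"
  unfolding loewner_le_def
proof
  fix u
  have "inner (h (xp \<mu>) u) u \<le> 2 * \<nu>^2 / \<mu>^2 * inner (B u) u" using hessian_le_at_one[OF \<mu>] .
  also have "\<dots> \<le> 4 * \<nu>^2 / \<mu>^2 * inner (B u) u"
    using hessian_psd[OF primal_in_interior[of 1]] \<mu>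
    by (intro mult_right_mono divide_right_mono) auto
  finally show "inner (h (xp \<mu>) u) u \<le> inner ((4 * \<nu>\<^sup>2 / \<mu>\<^sup>2) *\<^sub>R B u) u" by simp
qed

text \<open>For the conjugate Hessian, \<open>\<nabla>\<^sup>2F\<^sub>*(s\<^sub>\<mu>) = (\<mu>\<^sup>2 \<nabla>\<^sup>2F(x\<^sub>\<mu>))\<^sup>-\<^sup>1\<close> and the primal bounds are inverted.\<close>

lemma conjugate_hessian_loewner_lower:
  assumes \<mu>: "0 < \<mu>" "\<mu> \<le> 1"
  shows "loewner_le (\<lambda>u. (1 / (4 * \<nu>\<^sup>2)) *\<^sub>R inv B u) (hFs (sp \<mu>))"
  unfolding loewner_le_def
proof
  fix w
  have \<nu>: "\<nu>^2 > 0" using barrier_parameter_pos by simp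
  have x\<mu>: "xp \<mu> \<in> interior K" using primal_in_interior \<mu> by simp
  have x1: "xp 1 \<in> interior K" using primal_in_interior by simp
  let ?P = "\<lambda>v. (\<mu>^2) *\<^sub>R h (xp \<mu>) v"
  have "inner w (inv B w) \<le> 2 * \<nu>^2 * inner w (hFs (sp \<mu>) w)"
  proof (rule inverse_quadratic_form_le[where P = ?P and Q = B])
    show "linear ?P" using linear_hessian[OF x\<mu>] by (rule linear_compose_scale_right)
    show "linear B" using linear_hessian[OF x1] .
    show "inner (?P a) d = inner (?P d) a" for a d using hessian_sym[OF x\<mu>] by simp
    show "0 \<le> inner (?P a) a" for a using hessian_psd[OF x\<mu>] by simp
    show "inner (?P a) a \<le> 2 * \<nu>^2 * inner (B a) a" for a
      using hessian_le_at_one[OF \<mu>, of a] \<mu> by (simp add: field_simps)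
    show "?P (hFs (sp \<mu>) w) = w" using dual_hessian_on_path \<mu> by simp
    show "B (inv B w) = w" using hessian_surj[OF x1] by (simp add: surj_f_inv_f)
  qed (use \<nu> in simp)
  moreover have "0 \<le> inner w (hFs (sp \<mu>) w)"
    using hessian_psd[OF x\<mu>, of "hFs (sp \<mu>) w"] dual_hessian_on_path[OF \<mu>(1), of w] \<mu>
    by (metis inner_commute inner_scaleR_left mult_nonneg_nonneg zero_le_power2)
  then have "2 * \<nu>^2 * inner w (hFs (sp \<mu>) w) \<le> 4 * \<nu>^2 * inner w (hFs (sp \<mu>) w)"
    by (intro mult_right_mono) auto
  ultimately have "inner w (inv B w) \<le> 4 * \<nu>^2 * inner w (hFs (sp \<mu>) w)" by linarith
  then show "inner ((1 / (4 * \<nu>\<^sup>2)) *\<^sub>R inv B w) w \<le> inner (hFs (sp \<mu>) w) w"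
    using \<nu> by (simp add: inner_commute field_simps)
qed

lemma conjugate_hessian_loewner_upper:
  assumes \<mu>: "0 < \<mu>" "\<mu> \<le> 1"
  shows "loewner_le (hFs (sp \<mu>)) (\<lambda>u. (4 * \<nu>\<^sup>2 / \<mu>\<^sup>2) *\<^sub>R inv B u)"
  unfolding loewner_le_def
proof
  fix w
  have \<nu>: "\<nu>^2 > 0" using barrier_parameter_pos by simp
  have x\<mu>: "xp \<mu> \<in> interior K" using primal_in_interior \<mu> by simp
  have x1: "xp 1 \<in> interior K" using primal_in_interior by simp
  let ?Q = "\<lambda>v. (\<mu>^2) *\<^sub>R h (xp \<mu>) v"
  have Binv: "B (inv B w) = w" using hessian_surj[OF x1] by (simp add: surj_f_inv_f)
  have "inner w (hFs (sp \<mu>) w) \<le> 2 * \<nu>^2 / \<mu>^2 * inner w (inv B w)"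
  proof (rule inverse_quadratic_form_le[where P = B and Q = ?Q])
    show "linear ?Q" using linear_hessian[OF x\<mu>] by (rule linear_compose_scale_right)
    show "linear B" using linear_hessian[OF x1] .
    show "inner (B a) d = inner (B d) a" for a d using hessian_sym[OF x1] .
    show "0 \<le> inner (B a) a" for a using hessian_psd[OF x1] .
    show "inner (B a) a \<le> 2 * \<nu>^2 / \<mu>^2 * inner (?Q a) a" for a
      using hessian_at_one_le[OF \<mu>, of a] \<mu> by simp
    show "?Q (hFs (sp \<mu>) w) = w" using dual_hessian_on_path \<mu> by simp
  qed (use \<nu> \<mu> Binv in simp_all)
  also have "\<dots> \<le> 4 * \<nu>^2 / \<mu>^2 * inner w (inv B w)"
    using hessian_psd[OF x1, of "inv B w"] Binv \<mu>
    by (intro mult_right_mono divide_right_mono) (auto simp: inner_commute)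
  finally show "inner (hFs (sp \<mu>) w) w \<le> inner ((4 * \<nu>\<^sup>2 / \<mu>\<^sup>2) *\<^sub>R inv B w) w"
    by (simp add: inner_commute)
qed

end

text \<open>Strict primal and dual feasibility only serve to guarantee that the central path
  exists.\<close>

theorem mainTheorem3:
  fixes K :: "'e::euclidean_space set"
    and F :: "'e \<Rightarrow> real" and gF :: "'e \<Rightarrow> 'e" and hF :: "'e \<Rightarrow> 'e \<Rightarrow> 'e"
    and d3F :: "'e \<Rightarrow> 'e \<Rightarrow> 'e \<Rightarrow> 'e"
    and Fs :: "'e \<Rightarrow> real" and gFs :: "'e \<Rightarrow> 'e" and hFs :: "'e \<Rightarrow> 'e \<Rightarrow> 'e"
    and \<nu> :: real
    and A :: "'e \<Rightarrow> 'h::euclidean_space" and b :: 'h and c :: 'e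
    and xp sp :: "real \<Rightarrow> 'e" and yp :: "real \<Rightarrow> 'h"
  assumes cone: "regular_cone K"
    and barrier: "normal_barrier K F gF hF d3F \<nu>"
    and dual_def: "\<forall>s\<in>interior (dual_cone K).
                     Fs s = (SUP x\<in>interior K. - inner s x - F x)"
    and dual_grad: "\<forall>s\<in>interior (dual_cone K). (Fs has_derivative (\<lambda>u. inner (gFs s) u)) (at s)"
    and dual_hess: "\<forall>s\<in>interior (dual_cone K). (gFs has_derivative hFs s) (at s)"
    and linA: "linear A"
    and primal_strict: "\<exists>x\<in>interior K. A x = b"
    and dual_strict: "\<exists>y s. s \<in> interior (dual_cone K) \<and> s + adjoint A y = c"
    and path: "\<forall>\<mu>>0. xp \<mu> \<in> interior K \<and> A (xp \<mu>) = b \<and> sp \<mu> + adjoint A (yp \<mu>) = c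
                      \<and> sp \<mu> = - \<mu> *\<^sub>R gF (xp \<mu>)"
  shows "(\<forall>\<mu>0 \<mu>1. 0 < \<mu>1 \<and> \<mu>1 \<le> \<mu>0 \<longrightarrow>
            local_norm hF (xp \<mu>0) (xp \<mu>1) \<le> \<nu> \<and> local_norm hFs (sp \<mu>0) (sp \<mu>1) \<le> \<nu>)
      \<and> (\<forall>xs. limit_point_at0 xp xs \<longrightarrow> op_norm_B (hF (xp 1)) xs \<le> \<nu>)
      \<and> (\<forall>ss. limit_point_at0 sp ss \<longrightarrow> op_norm_B (inv (hF (xp 1))) ss \<le> \<nu>)
      \<and> (\<forall>\<mu>. 0 < \<mu> \<and> \<mu> \<le> 1 \<longrightarrow>
            loewner_le (\<lambda>u. (1 / (4 * \<nu>\<^sup>2)) *\<^sub>R hF (xp 1) u) (hF (xp \<mu>))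
          \<and> loewner_le (hF (xp \<mu>)) (\<lambda>u. (4 * \<nu>\<^sup>2 / \<mu>\<^sup>2) *\<^sub>R hF (xp 1) u)
          \<and> loewner_le (\<lambda>u. (1 / (4 * \<nu>\<^sup>2)) *\<^sub>R inv (hF (xp 1)) u) (hFs (sp \<mu>))
          \<and> loewner_le (hFs (sp \<mu>)) (\<lambda>u. (4 * \<nu>\<^sup>2 / \<mu>\<^sup>2) *\<^sub>R inv (hF (xp 1)) u))"
proof -
  interpret central_path K F gF hF d3F \<nu> Fs gFs hFs A b c xp sp yp
    by (intro central_path.intro conjugate_barrier.intro cone_barrier.intro
        conjugate_barrier_axioms.intro central_path_axioms.intro cone barrier dual_def dual_grad
        dual_hess linA path)
  show ?thesis
    unfolding local_norm_def
    using primal_local_norm_bound dual_local_norm_bound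
      primal_limit_point_bound dual_limit_point_bound
      hessian_loewner_lower hessian_loewner_upper
      conjugate_hessian_loewner_lower conjugate_hessian_loewner_upper
    by blast
qed

end
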